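(* Let $m,n\in\mathbb N$, $M_A=M_m(\mathbb C)$, $M_B=M_n(\mathbb C)$, let $U_A\in M_A$, $U_B\in M_B$ be unitary matrices, and let $\psi:M_A\to M_B$ be a quantum $(U_A,U_B)$-channel. Then the following are equivalent: (1) $\psi$ is $(U_A,U_B)$-entanglement breaking; (2) $\psi$ is in $(U_A,U_B)$-Holevo form.
   Context: For a unitary $U\in M_k(\mathbb C)$, a matrix $X$ is $U$-positive if $U^*X\ge0$; $X$ is a $U$-density matrix (quantum $U$-state) if moreover $\mathrm{Tr}(U^*X)=1$. For $r\in\mathbb N$, $U^r=\mathrm{diag}(U,\dots,U)$. A linear map $\psi:M_A\to M_B$ is $(U_A,U_B)$-CP if for every $r$ and every $V=[V_{ij}]\in M_r(M_A)$ with $(U_A^r)^*V\ge0$ one has $(U_B^r)^*[\psi(V_{ij})]\ge0$; it is a quantum $(U_A,U_B)$-channel if it is $(U_A,U_B)$-CP and $\phi(V):=U_B^*\psi(U_AV)$ is trace preserving (i.e. $\phi$ is a quantum channel). For unitaries $W_1\in M_p(\mathbb C)$, $W_2\in M_q(\mathbb C)$, a quantum $W_1\otimes W_2$-state $\rho\in M_p\otimes M_q$ is $W_1\otimes W_2$-separable if it is a convex combination of quantum $W_1\otimes W_2$-states of the form $\rho_1\otimes\rho_2$ with $\rho_1$ $W_1$-positive and $\rho_2$ $W_2$-positive. $\psi$ is $(U_A,U_B)$-entanglement breaking if for every $k\in\mathbb N$ and every $I_k\otimes U_A$-density matrix $S\in M_k(\mathbb C)\otimes M_A$, the matrix $(\mathrm{id}_k\otimes\psi)(S)$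 is $I_k\otimes U_B$-separable. $\psi$ is in $(U_A,U_B)$-Holevo form if $\psi(\rho)=\sum_k D_k\,\mathrm{Tr}(F_k\rho)$ for all $\rho\in M_A$ (finite sum), where each $D_k\in M_B$ is a $U_B$-density matrix and $\{F_k\}\subset M_A$ is a $U_A$-positive operator valued measure, i.e. each $F_kU_A$ is positive semidefinite and $\sum_kF_kU_A=I_A$. *)

theory Defs
  imports "Jordan_Normal_Form.Matrix"
begin

text \<open>Matrices of arbitrary size are represented by the type complex mat of
  Jordan_Normal_Form; M_d(C) is carrier_mat d d.\<close>

definition cadj :: "complex mat \<Rightarrow> complex mat" where
  "cadj A = mat (dim_col A) (dim_row A) (\<lambda>(i,j). cnj (A $$ (j,i)))"

definition mtrace :: "complex mat \<Rightarrow> complex" where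
  "mtrace A = (\<Sum>i<dim_row A. A $$ (i,i))"

definition unitary_mat :: "nat \<Rightarrow> complex mat \<Rightarrow> bool" where
  "unitary_mat d U \<longleftrightarrow> U \<in> carrier_mat d d \<and> cadj U * U = 1\<^sub>m d \<and> U * cadj U = 1\<^sub>m d"

definition psd :: "nat \<Rightarrow> complex mat \<Rightarrow> bool" where
  "psd d A \<longleftrightarrow> A \<in> carrier_mat d d \<and> cadj A = A \<and>
     (\<forall>v \<in> carrier_vec d. 0 \<le> Re (map_vec cnj v \<bullet> (A *\<^sub>v v)))"

definition kron :: "complex mat \<Rightarrow> complex mat \<Rightarrow> complex mat" where
  "kron A B = mat (dim_row A * dim_row B) (dim_col A * dim_col B)
     (\<lambda>(i,j). A $$ (i div dim_row B, j div dim_col B) * B $$ (i mod dim_row B, j mod dim_col B))"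

definition blockdiag :: "nat \<Rightarrow> complex mat \<Rightarrow> complex mat" where
  "blockdiag r U = kron (1\<^sub>m r) U"

definition blk :: "nat \<Rightarrow> complex mat \<Rightarrow> nat \<Rightarrow> nat \<Rightarrow> complex mat" where
  "blk d V a b = mat d d (\<lambda>(i,j). V $$ (a * d + i, b * d + j))"

text \<open>Blockwise application [\<psi>(V_ij)] = (id_r \<otimes> \<psi>)(V) for V in M_r(M_m), output in M_r(M_n).\<close>
definition blockmap :: "nat \<Rightarrow> nat \<Rightarrow> nat \<Rightarrow> (complex mat \<Rightarrow> complex mat) \<Rightarrow> complex mat \<Rightarrow> complex mat" where
  "blockmap r m n \<psi> V = mat (r * n) (r * n)
     (\<lambda>(i,j). \<psi> (blk m V (i div n) (j div n)) $$ (i mod n, j mod n))"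

definition U_positive :: "nat \<Rightarrow> complex mat \<Rightarrow> complex mat \<Rightarrow> bool" where
  "U_positive d U X \<longleftrightarrow> X \<in> carrier_mat d d \<and> psd d (cadj U * X)"

definition U_density :: "nat \<Rightarrow> complex mat \<Rightarrow> complex mat \<Rightarrow> bool" where
  "U_density d U X \<longleftrightarrow> U_positive d U X \<and> mtrace (cadj U * X) = 1"

definition lin_map :: "nat \<Rightarrow> nat \<Rightarrow> (complex mat \<Rightarrow> complex mat) \<Rightarrow> bool" where
  "lin_map m n \<psi> \<longleftrightarrow>
     (\<forall>A \<in> carrier_mat m m. \<psi> A \<in> carrier_mat n n) \<and>
     (\<forall>A \<in> carrier_mat m m. \<forall>B \<in> carrier_mat m m. \<psi> (A + B) = \<psi> A + \<psi> B) \<and>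
     (\<forall>A \<in> carrier_mat m m. \<forall>c::complex. \<psi> (c \<cdot>\<^sub>m A) = c \<cdot>\<^sub>m \<psi> A)"

definition U_CP :: "nat \<Rightarrow> nat \<Rightarrow> complex mat \<Rightarrow> complex mat \<Rightarrow> (complex mat \<Rightarrow> complex mat) \<Rightarrow> bool" where
  "U_CP m n UA UB \<psi> \<longleftrightarrow>
     (\<forall>r. \<forall>V \<in> carrier_mat (r * m) (r * m).
        psd (r * m) (cadj (blockdiag r UA) * V) \<longrightarrow>
        psd (r * n) (cadj (blockdiag r UB) * blockmap r m n \<psi> V))"

definition U_channel :: "nat \<Rightarrow> nat \<Rightarrow> complex mat \<Rightarrow> complex mat \<Rightarrow> (complex mat \<Rightarrow> complex mat) \<Rightarrow> bool" where
  "U_channel m n UA UB \<psi> \<longleftrightarrow> lin_map m n \<psi> \<and> U_CP m n UA UB \<psi> \<and>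
     (\<forall>V \<in> carrier_mat m m. mtrace (cadj UB * \<psi> (UA * V)) = mtrace V)"

fun msum :: "nat \<Rightarrow> (nat \<Rightarrow> complex mat) \<Rightarrow> nat \<Rightarrow> complex mat" where
  "msum d f 0 = 0\<^sub>m d d"
| "msum d f (Suc K) = msum d f K + f K"

definition W_separable :: "nat \<Rightarrow> nat \<Rightarrow> complex mat \<Rightarrow> complex mat \<Rightarrow> complex mat \<Rightarrow> bool" where
  "W_separable p q W1 W2 \<rho> \<longleftrightarrow> U_density (p * q) (kron W1 W2) \<rho> \<and>
     (\<exists>N (lam :: nat \<Rightarrow> real) \<rho>1 \<rho>2.
        (\<forall>i<N. 0 \<le> lam i) \<and> (\<Sum>i<N. lam i) = 1 \<and>
        (\<forall>i<N. U_positive p W1 (\<rho>1 i) \<and> U_positive q W2 (\<rho>2 i) \<and>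
               U_density (p * q) (kron W1 W2) (kron (\<rho>1 i) (\<rho>2 i))) \<and>
        \<rho> = msum (p * q) (\<lambda>i. complex_of_real (lam i) \<cdot>\<^sub>m kron (\<rho>1 i) (\<rho>2 i)) N)"

definition U_EB :: "nat \<Rightarrow> nat \<Rightarrow> complex mat \<Rightarrow> complex mat \<Rightarrow> (complex mat \<Rightarrow> complex mat) \<Rightarrow> bool" where
  "U_EB m n UA UB \<psi> \<longleftrightarrow>
     (\<forall>k. \<forall>S \<in> carrier_mat (k * m) (k * m).
        U_density (k * m) (kron (1\<^sub>m k) UA) S \<longrightarrow>
        W_separable k n (1\<^sub>m k) UB (blockmap k m n \<psi> S))"

definition U_Holevo :: "nat \<Rightarrow> nat \<Rightarrow> complex mat \<Rightarrow> complex mat \<Rightarrow> (complex mat \<Rightarrow> complex mat) \<Rightarrow> bool" where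
  "U_Holevo m n UA UB \<psi> \<longleftrightarrow>
     (\<exists>K D F.
        (\<forall>k<K. U_density n UB (D k)) \<and>
        (\<forall>k<K. F k \<in> carrier_mat m m \<and> psd m (F k * UA)) \<and>
        msum m (\<lambda>k. F k * UA) K = 1\<^sub>m m \<and>
        (\<forall>\<rho> \<in> carrier_mat m m. \<psi> \<rho> = msum n (\<lambda>k. mtrace (F k * \<rho>) \<cdot>\<^sub>m D k) K))"

end

theory Submission
  imports Defs
begin

text \<open>
  Holevo form implies entanglement breaking: if \<open>\<psi>(\<rho>) = \<Sum>\<^sub>l Tr(F\<^sub>l \<rho>) D\<^sub>l\<close>, then
  \<open>(id \<otimes> \<psi>)(S) = \<Sum>\<^sub>l \<sigma>\<^sub>l \<otimes> D\<^sub>l\<close> with \<open>\<sigma>\<^sub>l(a,b) = Tr(F\<^sub>l U\<^sub>A \<cdot> (U\<^sub>A\<^sup>* S\<^sub>a\<^sub>b))\<close>. Each \<open>\<sigma>\<^sub>l\<close> is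
  positive semidefinite because \<open>F\<^sub>l U\<^sub>A\<close> and \<open>(I \<otimes> U\<^sub>A)\<^sup>* S\<close> are: writing \<open>F\<^sub>l U\<^sub>A\<close> as a
  sum of rank-one matrices turns \<open>\<sigma>\<^sub>l\<close> into a sum of compressions of \<open>(I \<otimes> U\<^sub>A)\<^sup>* S\<close>.
  Normalising the \<open>\<sigma>\<^sub>l\<close> exhibits the output as a separable state.

  Entanglement breaking implies Holevo form: feed \<open>id \<otimes> \<psi>\<close> the maximally entangled state
  twisted by \<open>I \<otimes> U\<^sub>A\<close>, whose blocks are \<open>U\<^sub>A E\<^sub>a\<^sub>b / m\<close>. A separable decomposition
  \<open>\<Sum>\<^sub>l \<sigma>\<^sub>l \<otimes> D\<^sub>l\<close> of the output gives \<open>\<psi>(U\<^sub>A E\<^sub>a\<^sub>b) = m \<Sum>\<^sub>l \<sigma>\<^sub>l(a,b) D\<^sub>l\<close>, so by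
  linearity \<open>\<psi>(\<rho>) = \<Sum>\<^sub>l Tr(m \<sigma>\<^sub>l\<^sup>T U\<^sub>A\<^sup>* \<rho>) D\<^sub>l\<close>; trace preservation applied to the
  matrix units forces \<open>\<Sum>\<^sub>l m \<sigma>\<^sub>l\<^sup>T = I\<close>, i.e. \<open>F\<^sub>l = m \<sigma>\<^sub>l\<^sup>T U\<^sub>A\<^sup>*\<close> is a \<open>U\<^sub>A\<close>-POVM.
\<close>

section \<open>Matrix algebra\<close>

lemma sum_lessThan_mult:
  fixes f :: "nat \<Rightarrow> 'a::comm_monoid_add"
  shows "(\<Sum>x<k*d. f x) = (\<Sum>a<k. \<Sum>i<d. f (a*d+i))"
proof -
  have "(\<Sum>x\<in>{a*d..<a*d+d}. f x) = (\<Sum>i<d. f (a*d+i))" for a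
    using sum.shift_bounds_nat_ivl[of f 0 "a*d" d] by (simp add: atLeast0LessThan add.commute)
  then show ?thesis
    by (simp flip: sum.nat_group)
qed

lemma block_index_less: "(a::nat) < k \<Longrightarrow> i < d \<Longrightarrow> a*d+i < k*d"
proof -
  assume "a < k" "i < d"
  then have "a*d + i < (a+1)*d" by simp
  also have "\<dots> \<le> k*d" using \<open>a < k\<close> by (intro mult_right_mono) auto
  finally show ?thesis .
qed

lemma block_index_cases:
  assumes "(x::nat) < k*d"
  obtains a i where "a < k" "i < d" "x = a*d+i"
proof
  show "x div d < k" using assms by (simp add: less_mult_imp_div_less)
  show "x mod d < d" using assms by (cases "d = 0") auto
qed simp

lemma index_mult_mat_sum:
  assumes "A \<in> carrier_mat r p" "B \<in> carrier_mat p c" "i < r" "j < c"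
  shows "(A*B) $$ (i,j) = (\<Sum>q<p. A $$ (i,q) * B $$ (q,j))"
  using assms by (auto simp: scalar_prod_def atLeast0LessThan intro!: sum.cong)

lemma smult_smult_mat: "a \<cdot>\<^sub>m (b \<cdot>\<^sub>m A) = (a * b) \<cdot>\<^sub>m (A :: complex mat)"
  by (rule eq_matI) auto

lemma one_smult_mat [simp]: "(1::complex) \<cdot>\<^sub>m A = A"
  by (rule eq_matI) auto

lemma carrier_cadj [simp]: "A \<in> carrier_mat r c \<Longrightarrow> cadj A \<in> carrier_mat c r"
  by (auto simp: cadj_def)

lemma dim_cadj [simp]: "dim_row (cadj A) = dim_col A" "dim_col (cadj A) = dim_row A"
  by (auto simp: cadj_def)

lemma index_cadj [simp]: "i < dim_col A \<Longrightarrow> j < dim_row A \<Longrightarrow> cadj A $$ (i,j) = cnj (A $$ (j,i))"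
  by (auto simp: cadj_def)

lemma cadj_one [simp]: "cadj (1\<^sub>m k) = 1\<^sub>m k"
  by (rule eq_matI) auto

lemma index_cadj_mult:
  assumes "A \<in> carrier_mat p r" "B \<in> carrier_mat p c" "i < r" "j < c"
  shows "(cadj A * B) $$ (i,j) = (\<Sum>q<p. cnj (A $$ (q,i)) * B $$ (q,j))"
  using assms by (subst index_mult_mat_sum[of _ r p]) auto

lemma unitaryD:
  assumes "unitary_mat d U"
  shows "U \<in> carrier_mat d d" "cadj U * U = 1\<^sub>m d" "U * cadj U = 1\<^sub>m d"
  using assms by (auto simp: unitary_mat_def)

lemma unitary_mult_cadj_mult:
  assumes U: "unitary_mat d U" and B: "B \<in> carrier_mat d c"
  shows "U * (cadj U * B) = B"
proof -
  have "U * (cadj U * B) = (U * cadj U) * B"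
    using unitaryD(1)[OF U] B by (simp add: assoc_mult_mat[of _ d d _ d _ c])
  then show ?thesis using unitaryD(3)[OF U] B by simp
qed

lemma cadj_mult_unitary_mult:
  assumes U: "unitary_mat d U" and B: "B \<in> carrier_mat d c"
  shows "cadj U * (U * B) = B"
proof -
  have "cadj U * (U * B) = (cadj U * U) * B"
    using unitaryD(1)[OF U] B by (simp add: assoc_mult_mat[of _ d d _ d _ c])
  then show ?thesis using unitaryD(2)[OF U] B by simp
qed

lemma mult_cadj_mult_unitary:
  assumes U: "unitary_mat d U" and A: "A \<in> carrier_mat r d"
  shows "(A * cadj U) * U = A"
proof -
  have "(A * cadj U) * U = A * (cadj U * U)"
    using unitaryD(1)[OF U] A by (simp add: assoc_mult_mat[of _ r d _ d _ d])
  then show ?thesis using unitaryD(2)[OF U] A by simp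
qed

lemma mtrace_eq_sum: "A \<in> carrier_mat d d \<Longrightarrow> mtrace A = (\<Sum>i<d. A $$ (i,i))"
  by (simp add: mtrace_def)

lemma mtrace_smult: "A \<in> carrier_mat d d \<Longrightarrow> mtrace (c \<cdot>\<^sub>m A) = c * mtrace A"
  by (simp add: mtrace_eq_sum[of "c \<cdot>\<^sub>m A" d] mtrace_eq_sum[of A d] sum_distrib_left)

lemma mtrace_add: "A \<in> carrier_mat d d \<Longrightarrow> B \<in> carrier_mat d d \<Longrightarrow> mtrace (A + B) = mtrace A + mtrace B"
  by (simp add: mtrace_eq_sum[of "A + B" d] mtrace_eq_sum[of A d] mtrace_eq_sum[of B d] sum.distrib)

lemma mtrace_one: "mtrace (1\<^sub>m d) = of_nat d"
  by (simp add: mtrace_def)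

lemma mtrace_mult_sum:
  assumes "P \<in> carrier_mat d d" "Q \<in> carrier_mat d d"
  shows "mtrace (P * Q) = (\<Sum>i<d. \<Sum>j<d. P$$(i,j) * Q$$(j,i))"
proof -
  have "mtrace (P * Q) = (\<Sum>i<d. (P * Q) $$ (i,i))"
    using assms by (intro mtrace_eq_sum) auto
  also have "\<dots> = (\<Sum>i<d. \<Sum>j<d. P$$(i,j) * Q$$(j,i))"
    by (intro sum.cong refl index_mult_mat_sum[OF assms]) auto
  finally show ?thesis .
qed

lemma msum_carrier_index:
  assumes "\<forall>l<K. f l \<in> carrier_mat d d"
  shows "msum d f K \<in> carrier_mat d d \<and> (\<forall>i<d. \<forall>j<d. msum d f K $$ (i,j) = (\<Sum>l<K. f l $$ (i,j)))"
  using assms by (induction K) auto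

lemma carrier_msum: "\<forall>l<K. f l \<in> carrier_mat d d \<Longrightarrow> msum d f K \<in> carrier_mat d d"
  using msum_carrier_index by blast

lemma index_msum:
  "\<forall>l<K. f l \<in> carrier_mat d d \<Longrightarrow> i < d \<Longrightarrow> j < d \<Longrightarrow> msum d f K $$ (i,j) = (\<Sum>l<K. f l $$ (i,j))"
  using msum_carrier_index by blast

lemma msum_cong: "(\<And>l. l < K \<Longrightarrow> f l = g l) \<Longrightarrow> msum d f K = msum d g K"
  by (induction K) auto

lemma smult_msum:
  assumes "\<forall>l<K. f l \<in> carrier_mat d d"
  shows "c \<cdot>\<^sub>m msum d f K = msum d (\<lambda>l. c \<cdot>\<^sub>m f l) K"
  using assms
proof (induction K)
  case (Suc K)
  then show ?case
    using carrier_msum[of K f d] by (simp add: add_smult_distrib_left_mat[of _ d d])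
qed simp

lemma mult_msum:
  assumes A: "A \<in> carrier_mat d d" and f: "\<forall>l<K. f l \<in> carrier_mat d d"
  shows "A * msum d f K = msum d (\<lambda>l. A * f l) K"
  using f
proof (induction K)
  case (Suc K)
  have "A * msum d f (Suc K) = A * msum d f K + A * f K"
    using A Suc.prems carrier_msum[of K f d] by (simp add: mult_add_distrib_mat[of _ d d])
  then show ?case using Suc by simp
qed (use A in simp)

lemma mtrace_msum:
  assumes "\<forall>l<K. f l \<in> carrier_mat d d"
  shows "mtrace (msum d f K) = (\<Sum>l<K. mtrace (f l))"
  using assms
proof (induction K)
  case (Suc K)
  then show ?case using carrier_msum[of K f d] mtrace_add[of "msum d f K" d "f K"] by simp
qed (simp add: mtrace_def)

lemma mtrace_mult_msum:
  assumes "A \<in> carrier_mat d d" and "\<forall>l<K. f l \<in> carrier_mat d d"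
  shows "mtrace (A * msum d f K) = (\<Sum>l<K. mtrace (A * f l))"
  using assms by (simp add: mult_msum mtrace_msum)

lemma lin_map_carrier: "lin_map m n \<psi> \<Longrightarrow> A \<in> carrier_mat m m \<Longrightarrow> \<psi> A \<in> carrier_mat n n"
  by (simp add: lin_map_def)

lemma lin_map_add:
  "lin_map m n \<psi> \<Longrightarrow> A \<in> carrier_mat m m \<Longrightarrow> B \<in> carrier_mat m m \<Longrightarrow> \<psi> (A + B) = \<psi> A + \<psi> B"
  by (simp add: lin_map_def)

lemma lin_map_smult: "lin_map m n \<psi> \<Longrightarrow> A \<in> carrier_mat m m \<Longrightarrow> \<psi> (c \<cdot>\<^sub>m A) = c \<cdot>\<^sub>m \<psi> A"
  by (simp add: lin_map_def)

lemma lin_map_zero: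
  assumes L: "lin_map m n \<psi>"
  shows "\<psi> (0\<^sub>m m m) = 0\<^sub>m n n"
proof -
  have "0\<^sub>m m m = (0::complex) \<cdot>\<^sub>m 1\<^sub>m m" by (rule eq_matI) auto
  then have "\<psi> (0\<^sub>m m m) = \<psi> (0 \<cdot>\<^sub>m 1\<^sub>m m)" by simp
  also have "\<dots> = 0 \<cdot>\<^sub>m \<psi> (1\<^sub>m m)" using lin_map_smult[OF L, of "1\<^sub>m m"] by simp
  also have "\<dots> = 0\<^sub>m n n" using lin_map_carrier[OF L, of "1\<^sub>m m"] by (intro eq_matI) auto
  finally show ?thesis .
qed

lemma lin_map_msum:
  assumes L: "lin_map m n \<psi>" and f: "\<forall>l<K. f l \<in> carrier_mat m m"
  shows "\<psi> (msum m f K) = msum n (\<lambda>l. \<psi> (f l)) K"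
  using f
proof (induction K)
  case (Suc K)
  then show ?case using lin_map_add[OF L] carrier_msum by simp
qed (simp add: lin_map_zero[OF L])

lemma lin_map_mult_left:
  assumes L: "lin_map m n \<psi>" and U: "U \<in> carrier_mat m m"
  shows "lin_map m n (\<lambda>Y. \<psi> (U * Y))"
  unfolding lin_map_def
  using U lin_map_carrier[OF L] lin_map_add[OF L] lin_map_smult[OF L]
  by (auto simp: mult_add_distrib_mat mult_smult_distrib)

definition matrix_unit :: "nat \<Rightarrow> nat \<Rightarrow> nat \<Rightarrow> complex mat" where
  "matrix_unit m a b = mat m m (\<lambda>(i,j). if i = a \<and> j = b then 1 else 0)"

lemma carrier_matrix_unit [simp]: "matrix_unit m a b \<in> carrier_mat m m"
  by (simp add: matrix_unit_def)

lemma dim_matrix_unit [simp]: "dim_row (matrix_unit m a b) = m" "dim_col (matrix_unit m a b) = m"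
  by (simp_all add: matrix_unit_def)

lemma index_matrix_unit [simp]:
  "i < m \<Longrightarrow> j < m \<Longrightarrow> matrix_unit m a b $$ (i,j) = (if i = a \<and> j = b then 1 else 0)"
  by (simp add: matrix_unit_def)

lemma mtrace_matrix_unit: "a < m \<Longrightarrow> mtrace (matrix_unit m a b) = (if a = b then 1 else 0)"
  by (auto simp: mtrace_def matrix_unit_def intro: sum.neutral)

lemma index_mult_matrix_unit:
  assumes U: "U \<in> carrier_mat m m" and "a < m" "i < m" "j < m"
  shows "(U * matrix_unit m a b) $$ (i,j) = (if j = b then U $$ (i,a) else 0)"
proof -
  have "(U * matrix_unit m a b) $$ (i,j) = (\<Sum>p<m. U $$ (i,p) * matrix_unit m a b $$ (p,j))"
    using assms by (intro index_mult_mat_sum[OF U carrier_matrix_unit])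
  also have "\<dots> = (\<Sum>p<m. if p = a then (if j = b then U $$ (i,a) else 0) else 0)"
    using assms by (intro sum.cong) auto
  finally show ?thesis using assms by simp
qed

lemma matrix_unit_expansion:
  assumes X: "X \<in> carrier_mat m m"
  shows "X = msum m (\<lambda>x. X $$ (x div m, x mod m) \<cdot>\<^sub>m matrix_unit m (x div m) (x mod m)) (m*m)"
    (is "X = msum m ?f (m*m)")
proof -
  have f: "\<forall>x<m*m. ?f x \<in> carrier_mat m m" by simp
  show ?thesis
  proof (rule eq_matI)
    fix i j assume "i < dim_row (msum m ?f (m*m))" "j < dim_col (msum m ?f (m*m))"
    then have ij: "i < m" "j < m" using carrier_msum[OF f] by auto
    have "msum m ?f (m*m) $$ (i,j) = (\<Sum>a<m. \<Sum>b<m. X $$ (a,b) * matrix_unit m a b $$ (i,j))"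
      using ij by (simp add: index_msum[OF f] sum_lessThan_mult)
    also have "\<dots> = (\<Sum>a<m. if a = i then X $$ (a,j) else 0)"
      using ij by (intro sum.cong) (auto simp: if_distrib[of "(*) _"] cong: if_cong)
    also have "\<dots> = X $$ (i,j)"
      using ij by simp
    finally show "X $$ (i,j) = msum m ?f (m*m) $$ (i,j)" ..
  qed (use X carrier_msum[OF f] in auto)
qed

lemma lin_map_unit_expansion:
  assumes L: "lin_map m n \<phi>" and X: "X \<in> carrier_mat m m" and st: "s < n" "t < n"
  shows "\<phi> X $$ (s,t) = (\<Sum>a<m. \<Sum>b<m. X $$ (a,b) * \<phi> (matrix_unit m a b) $$ (s,t))"
proof -
  let ?f = "\<lambda>x. X $$ (x div m, x mod m) \<cdot>\<^sub>m matrix_unit m (x div m) (x mod m)"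
  have f: "\<forall>x<m*m. ?f x \<in> carrier_mat m m" by simp
  have \<phi>f: "\<forall>x<m*m. \<phi> (?f x) \<in> carrier_mat n n" using lin_map_carrier[OF L] by simp
  have "\<phi> X = msum n (\<lambda>x. \<phi> (?f x)) (m*m)"
    using lin_map_msum[OF L f] matrix_unit_expansion[OF X] by simp
  then have "\<phi> X $$ (s,t) = (\<Sum>x<m*m. \<phi> (?f x) $$ (s,t))"
    using st by (simp add: index_msum[OF \<phi>f])
  also have "\<dots> = (\<Sum>a<m. \<Sum>b<m. X $$ (a,b) * \<phi> (matrix_unit m a b) $$ (s,t))"
  proof -
    have "dim_row (\<phi> (matrix_unit m a b)) = n" "dim_col (\<phi> (matrix_unit m a b)) = n" for a b
      using lin_map_carrier[OF L carrier_matrix_unit] by auto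
    then show ?thesis
      using st by (simp add: sum_lessThan_mult lin_map_smult[OF L])
  qed
  finally show ?thesis .
qed

lemma lin_map_from_unit_values:
  assumes L: "lin_map m n \<phi>"
    and G: "\<And>l. l < N \<Longrightarrow> G l \<in> carrier_mat m m" and D: "\<And>l. l < N \<Longrightarrow> D l \<in> carrier_mat n n"
    and units: "\<And>a b. a < m \<Longrightarrow> b < m \<Longrightarrow> \<phi> (matrix_unit m a b) = msum n (\<lambda>l. G l $$ (a,b) \<cdot>\<^sub>m D l) N"
    and X: "X \<in> carrier_mat m m"
  shows "\<phi> X = msum n (\<lambda>l. mtrace (transpose_mat (G l) * X) \<cdot>\<^sub>m D l) N"
proof -
  have C: "\<forall>l<N. mtrace (transpose_mat (G l) * X) \<cdot>\<^sub>m D l \<in> carrier_mat n n" using D by simp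
  have Ddim: "dim_row (D l) = n" "dim_col (D l) = n" if "l < N" for l using D[OF that] by auto
  have tr: "mtrace (transpose_mat (G l) * X) = (\<Sum>a<m. \<Sum>b<m. G l $$ (a,b) * X $$ (a,b))" if "l < N" for l
  proof -
    have "mtrace (transpose_mat (G l) * X) = (\<Sum>i<m. \<Sum>j<m. G l $$ (j,i) * X $$ (j,i))"
      using G[OF that] X by (simp add: mtrace_mult_sum[of _ m])
    also have "\<dots> = (\<Sum>j<m. \<Sum>i<m. G l $$ (j,i) * X $$ (j,i))"
      by (rule sum.swap)
    finally show ?thesis .
  qed
  show ?thesis
  proof (rule eq_matI)
    fix s t assume "s < dim_row (msum n (\<lambda>l. mtrace (transpose_mat (G l) * X) \<cdot>\<^sub>m D l) N)"
      "t < dim_col (msum n (\<lambda>l. mtrace (transpose_mat (G l) * X) \<cdot>\<^sub>m D l) N)"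
    then have st: "s < n" "t < n" using carrier_msum[OF C] by auto
    have "\<phi> X $$ (s,t) = (\<Sum>a<m. \<Sum>b<m. X $$ (a,b) * (\<Sum>l<N. G l $$ (a,b) * D l $$ (s,t)))"
      using lin_map_unit_expansion[OF L X st] units D st by (simp add: index_msum Ddim)
    also have "\<dots> = (\<Sum>a<m. \<Sum>b<m. \<Sum>l<N. G l $$ (a,b) * X $$ (a,b) * D l $$ (s,t))"
      by (simp add: sum_distrib_left mult_ac)
    also have "\<dots> = (\<Sum>l<N. \<Sum>a<m. \<Sum>b<m. G l $$ (a,b) * X $$ (a,b) * D l $$ (s,t))"
      by (simp only: sum.swap[where A="{..<m}" and B="{..<N}"])
    also have "\<dots> = msum n (\<lambda>l. mtrace (transpose_mat (G l) * X) \<cdot>\<^sub>m D l) N $$ (s,t)"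
      using st D tr by (simp add: index_msum[OF C] sum_distrib_right Ddim)
    finally show "\<phi> X $$ (s,t) = msum n (\<lambda>l. mtrace (transpose_mat (G l) * X) \<cdot>\<^sub>m D l) N $$ (s,t)" .
  qed (use carrier_msum[OF C] lin_map_carrier[OF L X] in auto)
qed

section \<open>Block matrices and Kronecker products\<close>

lemma carrier_blk [simp]: "blk d X a b \<in> carrier_mat d d"
  by (simp add: blk_def)

lemma dim_blk [simp]: "dim_row (blk d X a b) = d" "dim_col (blk d X a b) = d"
  by (simp_all add: blk_def)

lemma index_blk [simp]: "i < d \<Longrightarrow> j < d \<Longrightarrow> blk d X a b $$ (i,j) = X $$ (a*d+i, b*d+j)"
  by (simp add: blk_def)

lemma blk_eqI:
  assumes A: "A \<in> carrier_mat (k*d) (k*d)" and B: "B \<in> carrier_mat (k*d) (k*d)"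
    and blocks: "\<And>a b. a < k \<Longrightarrow> b < k \<Longrightarrow> blk d A a b = blk d B a b"
  shows "A = B"
proof (rule eq_matI)
  fix x y assume "x < dim_row B" "y < dim_col B"
  then have "x < k*d" "y < k*d" using B by auto
  then obtain a i b j where "a < k" "i < d" "x = a*d+i" "b < k" "j < d" "y = b*d+j"
    by (metis block_index_cases)
  then show "A $$ (x,y) = B $$ (x,y)"
    using blocks[of a b] index_blk[of i d j] by metis
qed (use A B in auto)

lemma blk_smult:
  assumes "A \<in> carrier_mat (k*d) (k*d)" "a < k" "b < k"
  shows "blk d (c \<cdot>\<^sub>m A) a b = c \<cdot>\<^sub>m blk d A a b"
  by (rule eq_matI) (use assms block_index_less in auto)

lemma blk_msum:
  assumes f: "\<forall>l<K. f l \<in> carrier_mat (k*d) (k*d)" and ab: "a < k" "b < k"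
  shows "blk d (msum (k*d) f K) a b = msum d (\<lambda>l. blk d (f l) a b) K"
proof (rule eq_matI)
  have "\<forall>l<K. blk d (f l) a b \<in> carrier_mat d d" by simp
  note blocks = carrier_msum[OF this] index_msum[OF this]
  fix i j assume "i < dim_row (msum d (\<lambda>l. blk d (f l) a b) K)" "j < dim_col (msum d (\<lambda>l. blk d (f l) a b) K)"
  then have ij: "i < d" "j < d" using blocks(1) by auto
  then show "blk d (msum (k*d) f K) a b $$ (i,j) = msum d (\<lambda>l. blk d (f l) a b) K $$ (i,j)"
    using ab block_index_less by (simp add: index_msum[OF f] blocks(2))
qed (use carrier_msum[of K "\<lambda>l. blk d (f l) a b" d] in auto)

lemma carrier_blockmap [simp]: "blockmap r m n \<psi> V \<in> carrier_mat (r*n) (r*n)"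
  by (simp add: blockmap_def)

lemma index_blockmap:
  "a < r \<Longrightarrow> b < r \<Longrightarrow> s < n \<Longrightarrow> t < n \<Longrightarrow>
   blockmap r m n \<psi> V $$ (a*n+s, b*n+t) = \<psi> (blk m V a b) $$ (s, t)"
  using block_index_less[of a r s n] block_index_less[of b r t n] by (simp add: blockmap_def)

lemma blk_blockmap:
  assumes "a < r" "b < r" "\<psi> (blk m V a b) \<in> carrier_mat n n"
  shows "blk n (blockmap r m n \<psi> V) a b = \<psi> (blk m V a b)"
  by (rule eq_matI) (use assms index_blockmap in auto)

lemma carrier_kron: "A \<in> carrier_mat p p \<Longrightarrow> B \<in> carrier_mat q q \<Longrightarrow> kron A B \<in> carrier_mat (p*q) (p*q)"
  by (simp add: kron_def)

lemma index_kron: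
  "A \<in> carrier_mat p p \<Longrightarrow> B \<in> carrier_mat q q \<Longrightarrow> a < p \<Longrightarrow> b < p \<Longrightarrow> i < q \<Longrightarrow> j < q \<Longrightarrow>
   kron A B $$ (a*q+i, b*q+j) = A $$ (a, b) * B $$ (i, j)"
  using block_index_less[of a p i q] block_index_less[of b p j q] by (simp add: kron_def)

lemma blk_kron:
  assumes "A \<in> carrier_mat p p" "B \<in> carrier_mat q q" "a < p" "b < p"
  shows "blk q (kron A B) a b = A $$ (a,b) \<cdot>\<^sub>m B"
  by (rule eq_matI) (use assms index_kron in auto)

lemma kron_smult_left:
  assumes A: "A \<in> carrier_mat p p" and B: "B \<in> carrier_mat q q"
  shows "kron (c \<cdot>\<^sub>m A) B = c \<cdot>\<^sub>m kron A B"
proof (rule blk_eqI[of _ p q])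
  have cA: "c \<cdot>\<^sub>m A \<in> carrier_mat p p" using A by simp
  then show "kron (c \<cdot>\<^sub>m A) B \<in> carrier_mat (p*q) (p*q)" using carrier_kron B by blast
  show "c \<cdot>\<^sub>m kron A B \<in> carrier_mat (p*q) (p*q)" using carrier_kron[OF A B] by simp
  fix a b assume ab: "a < p" "b < p"
  show "blk q (kron (c \<cdot>\<^sub>m A) B) a b = blk q (c \<cdot>\<^sub>m kron A B) a b"
    using A ab by (simp add: blk_kron[OF cA B ab] blk_smult[OF carrier_kron[OF A B] ab] blk_kron[OF A B ab]
        smult_smult_mat)
qed

lemma kron_smult_right:
  assumes A: "A \<in> carrier_mat p p" and B: "B \<in> carrier_mat q q"
  shows "kron A (c \<cdot>\<^sub>m B) = c \<cdot>\<^sub>m kron A B"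
proof (rule blk_eqI[of _ p q])
  have cB: "c \<cdot>\<^sub>m B \<in> carrier_mat q q" using B by simp
  then show "kron A (c \<cdot>\<^sub>m B) \<in> carrier_mat (p*q) (p*q)" using carrier_kron A by blast
  show "c \<cdot>\<^sub>m kron A B \<in> carrier_mat (p*q) (p*q)" using carrier_kron[OF A B] by simp
  fix a b assume ab: "a < p" "b < p"
  show "blk q (kron A (c \<cdot>\<^sub>m B)) a b = blk q (c \<cdot>\<^sub>m kron A B) a b"
    using B by (simp add: blk_kron[OF A cB ab] blk_smult[OF carrier_kron[OF A B] ab] blk_kron[OF A B ab]
        smult_smult_mat mult.commute)
qed

lemma blk_msum_kron:
  assumes A: "\<And>l. l < K \<Longrightarrow> A l \<in> carrier_mat k k" and B: "\<And>l. l < K \<Longrightarrow> B l \<in> carrier_mat n n"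
    and ab: "a < k" "b < k"
  shows "blk n (msum (k*n) (\<lambda>l. kron (A l) (B l)) K) a b = msum n (\<lambda>l. A l $$ (a,b) \<cdot>\<^sub>m B l) K"
proof -
  have "\<forall>l<K. kron (A l) (B l) \<in> carrier_mat (k*n) (k*n)"
    using A B carrier_kron by blast
  then have "blk n (msum (k*n) (\<lambda>l. kron (A l) (B l)) K) a b = msum n (\<lambda>l. blk n (kron (A l) (B l)) a b) K"
    by (rule blk_msum[OF _ ab])
  also have "\<dots> = msum n (\<lambda>l. A l $$ (a,b) \<cdot>\<^sub>m B l) K"
  proof (rule msum_cong)
    fix l assume "l < K"
    show "blk n (kron (A l) (B l)) a b = A l $$ (a,b) \<cdot>\<^sub>m B l"
      by (rule blk_kron[OF A[OF \<open>l < K\<close>] B[OF \<open>l < K\<close>] ab])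
  qed
  finally show ?thesis .
qed

lemma mtrace_blk_sum:
  assumes "X \<in> carrier_mat (k*d) (k*d)"
  shows "mtrace X = (\<Sum>a<k. mtrace (blk d X a a))"
  using assms by (simp add: mtrace_eq_sum[of X "k*d"] mtrace_eq_sum[of _ d] sum_lessThan_mult)

lemma mtrace_kron:
  assumes A: "A \<in> carrier_mat p p" and B: "B \<in> carrier_mat q q"
  shows "mtrace (kron A B) = mtrace A * mtrace B"
proof -
  have "mtrace (kron A B) = (\<Sum>a<p. A $$ (a,a) * mtrace B)"
    using carrier_kron[OF A B] B
    by (simp add: mtrace_blk_sum[of _ p q] blk_kron[OF A B] mtrace_smult)
  then show ?thesis
    using A by (simp add: mtrace_eq_sum[of A p] sum_distrib_right)
qed

lemma blk_cadj_kron_one_mult: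
  assumes U: "U \<in> carrier_mat d d" and X: "X \<in> carrier_mat (k*d) (k*d)" and ab: "a < k" "b < k"
  shows "blk d (cadj (kron (1\<^sub>m k) U) * X) a b = cadj U * blk d X a b"
proof (rule eq_matI)
  let ?K = "kron (1\<^sub>m k) U"
  have K: "?K \<in> carrier_mat (k*d) (k*d)" using carrier_kron[OF _ U] by simp
  fix i j assume "i < dim_row (cadj U * blk d X a b)" "j < dim_col (cadj U * blk d X a b)"
  then have ij: "i < d" "j < d" using U by auto
  have K_entry: "cnj (?K $$ (a'*d+p, a*d+i)) = (if a' = a then cnj (U$$(p,i)) else 0)"
    if "a' < k" "p < d" for a' p
    using index_kron[OF _ U, of "1\<^sub>m k" k a' a p i] that ab ij by simp
  have "blk d (cadj ?K * X) a b $$ (i,j) = (\<Sum>q<k*d. cnj (?K $$ (q, a*d+i)) * X $$ (q, b*d+j))"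
    using index_cadj_mult[OF K X] block_index_less ab ij by simp
  also have "\<dots> = (\<Sum>a'<k. \<Sum>p<d. cnj (?K $$ (a'*d+p, a*d+i)) * X $$ (a'*d+p, b*d+j))"
    by (rule sum_lessThan_mult)
  also have "\<dots> = (\<Sum>a'<k. if a' = a then (\<Sum>p<d. cnj (U$$(p,i)) * X $$ (a*d+p, b*d+j)) else 0)"
    by (intro sum.cong refl) (auto simp: K_entry)
  also have "\<dots> = (cadj U * blk d X a b) $$ (i,j)"
    using ab ij by (simp add: index_cadj_mult[OF U carrier_blk])
  finally show "blk d (cadj ?K * X) a b $$ (i,j) = (cadj U * blk d X a b) $$ (i,j)" .
qed (use U in auto)

lemma cadj_kron_one_mult_kron:
  assumes U: "U \<in> carrier_mat n n" and A: "A \<in> carrier_mat k k" and B: "B \<in> carrier_mat n n"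
  shows "cadj (kron (1\<^sub>m k) U) * kron A B = kron A (cadj U * B)"
proof (rule blk_eqI)
  have UB: "cadj U * B \<in> carrier_mat n n" using U B by auto
  have "kron (1\<^sub>m k) U \<in> carrier_mat (k*n) (k*n)" using carrier_kron[OF _ U] by simp
  then show "cadj (kron (1\<^sub>m k) U) * kron A B \<in> carrier_mat (k*n) (k*n)"
    using carrier_kron[OF A B] by auto
  show "kron A (cadj U * B) \<in> carrier_mat (k*n) (k*n)"
    by (rule carrier_kron[OF A UB])
  fix a b assume ab: "a < k" "b < k"
  show "blk n (cadj (kron (1\<^sub>m k) U) * kron A B) a b = blk n (kron A (cadj U * B)) a b"
    using U B ab by (simp add: blk_cadj_kron_one_mult[OF U carrier_kron[OF A B]] blk_kron[OF A B]
        blk_kron[OF A UB] mult_smult_distrib[of _ n n])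
qed

lemma mtrace_cadj_kron_one_mult:
  assumes U: "U \<in> carrier_mat d d" and X: "X \<in> carrier_mat (k*d) (k*d)"
  shows "mtrace (cadj (kron (1\<^sub>m k) U) * X) = (\<Sum>a<k. mtrace (cadj U * blk d X a a))"
proof -
  have "kron (1\<^sub>m k) U \<in> carrier_mat (k*d) (k*d)" using carrier_kron[OF _ U] by simp
  then have "cadj (kron (1\<^sub>m k) U) * X \<in> carrier_mat (k*d) (k*d)" using X by auto
  then show ?thesis
    by (simp add: mtrace_blk_sum[of _ k d] blk_cadj_kron_one_mult[OF U X])
qed

section \<open>Positive semidefinite matrices\<close>

definition qform :: "nat \<Rightarrow> complex mat \<Rightarrow> (nat \<Rightarrow> complex) \<Rightarrow> complex" where
  "qform d A f = (\<Sum>i<d. \<Sum>j<d. cnj (f i) * A $$ (i,j) * f j)"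

definition hermitian :: "nat \<Rightarrow> complex mat \<Rightarrow> bool" where
  "hermitian d A \<longleftrightarrow> (\<forall>i<d. \<forall>j<d. cnj (A $$ (j,i)) = A $$ (i,j))"

lemma qform_vec:
  assumes "A \<in> carrier_mat d d"
  shows "map_vec cnj (vec d f) \<bullet> (A *\<^sub>v vec d f) = qform d A f"
  using assms
  by (auto simp: qform_def scalar_prod_def atLeast0LessThan sum_distrib_left mult.assoc intro!: sum.cong)

lemma psd_iff:
  "psd d A \<longleftrightarrow> A \<in> carrier_mat d d \<and> hermitian d A \<and> (\<forall>f. 0 \<le> Re (qform d A f))"
proof
  assume p: "psd d A"
  then have A: "A \<in> carrier_mat d d" and h: "cadj A = A" by (auto simp: psd_def)
  have "cnj (A $$ (j,i)) = A $$ (i,j)" if "i < d" "j < d" for i j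
    using that A h index_cadj[of i A j] by simp
  then have "hermitian d A" by (simp add: hermitian_def)
  moreover have "0 \<le> Re (qform d A f)" for f
    using p qform_vec[OF A] unfolding psd_def by (metis vec_carrier)
  ultimately show "A \<in> carrier_mat d d \<and> hermitian d A \<and> (\<forall>f. 0 \<le> Re (qform d A f))"
    using A by auto
next
  assume a: "A \<in> carrier_mat d d \<and> hermitian d A \<and> (\<forall>f. 0 \<le> Re (qform d A f))"
  then have "cadj A = A"
    by (intro eq_matI) (auto simp: hermitian_def)
  moreover have "v = vec d (\<lambda>i. v $ i)" if "v \<in> carrier_vec d" for v :: "complex vec"
    using that by auto
  ultimately show "psd d A"
    using a qform_vec unfolding psd_def by metis
qed

lemma psd_carrier: "psd d A \<Longrightarrow> A \<in> carrier_mat d d"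
  by (simp add: psd_iff)

lemma psd_hermitian: "psd d A \<Longrightarrow> i < d \<Longrightarrow> j < d \<Longrightarrow> cnj (A $$ (j,i)) = A $$ (i,j)"
  by (simp add: psd_iff hermitian_def)

lemma psd_qform: "psd d A \<Longrightarrow> 0 \<le> Re (qform d A f)"
  by (simp add: psd_iff)

lemma qform_perturb:
  assumes p: "psd d A" and t: "t < d"
  shows "qform d A (\<lambda>p. f p + (if p = t then x else 0)) =
     qform d A f + cnj x * (\<Sum>j<d. A$$(t,j) * f j) + x * cnj (\<Sum>j<d. A$$(t,j) * f j)
       + cnj x * x * A$$(t,t)"
proof -
  let ?g = "\<lambda>p. if p = t then x else 0"
  note delta = if_distrib[of "(*) _"] if_distrib[of "\<lambda>y. y * _"] if_distrib[of cnj]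
  have row: "(\<Sum>i<d. cnj (f i) * A$$(i,t)) = cnj (\<Sum>j<d. A$$(t,j) * f j)"
    using psd_hermitian[OF p _ t] by (auto simp: mult.commute intro!: sum.cong)
  have "qform d A (\<lambda>p. f p + ?g p) = qform d A f + (\<Sum>i<d. \<Sum>j<d. cnj (f i) * A$$(i,j) * ?g j)
      + (\<Sum>i<d. \<Sum>j<d. cnj (?g i) * A$$(i,j) * f j) + qform d A ?g"
    unfolding qform_def by (simp add: distrib_left distrib_right sum.distrib)
  also have "(\<Sum>i<d. \<Sum>j<d. cnj (f i) * A$$(i,j) * ?g j) = (\<Sum>i<d. cnj (f i) * A$$(i,t)) * x"
    using t by (simp add: delta sum_distrib_right cong: if_cong)
  also have "(\<Sum>i<d. \<Sum>j<d. cnj (?g i) * A$$(i,j) * f j) = (\<Sum>i<d. cnj (?g i) * (\<Sum>j<d. A$$(i,j) * f j))"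
    by (simp add: sum_distrib_left mult.assoc)
  also have "\<dots> = cnj x * (\<Sum>j<d. A$$(t,j) * f j)"
    using t by (simp add: delta cong: if_cong)
  also have "qform d A ?g = cnj x * x * A$$(t,t)"
    using t by (simp add: qform_def delta cong: if_cong)
  finally show ?thesis by (simp add: row algebra_simps)
qed

lemma psd_diag:
  assumes p: "psd d A" and i: "i < d"
  shows "A$$(i,i) = complex_of_real (Re (A$$(i,i)))" "0 \<le> Re (A$$(i,i))"
proof -
  have "cnj (A$$(i,i)) = A$$(i,i)" using psd_hermitian[OF p i i] .
  then show "A$$(i,i) = complex_of_real (Re (A$$(i,i)))"
    by (auto simp: complex_eq_iff)
  have "qform d A (\<lambda>p. 0 + (if p = i then 1 else 0)) = A$$(i,i)"
    using qform_perturb[OF p i, of "\<lambda>_. 0" 1] by (simp add: qform_def)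
  then show "0 \<le> Re (A$$(i,i))" using psd_qform[OF p] by metis
qed

lemma psd_row_zero:
  assumes p: "psd d A" and t: "t < d" and z: "A$$(t,t) = 0" and j: "j < d"
  shows "A$$(t,j) = 0"
proof (rule ccontr)
  let ?b = "A$$(t,j)"
  assume nz: "?b \<noteq> 0"
  let ?f = "\<lambda>p. if p = j then (1::complex) else 0"
  have b: "(\<Sum>q<d. A$$(t,q) * ?f q) = ?b"
    using j by (simp add: if_distrib[of "(*) _"] cong: if_cong)
  define s where "s = (\<bar>Re (qform d A ?f)\<bar> + 1) / (2 * (cmod ?b)^2)"
  let ?x = "- complex_of_real s * ?b"
  have "qform d A (\<lambda>p. ?f p + (if p = t then ?x else 0)) = qform d A ?f + cnj ?x * ?b + ?x * cnj ?b"
    using qform_perturb[OF p t, of ?f ?x] b z by simp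
  moreover have "Re (cnj ?x * ?b + ?x * cnj ?b) = - 2 * s * (cmod ?b)^2"
    by (simp add: cmod_def algebra_simps power2_eq_square)
  moreover have "2 * s * (cmod ?b)^2 = \<bar>Re (qform d A ?f)\<bar> + 1"
    using nz by (simp add: s_def)
  ultimately have "Re (qform d A (\<lambda>p. ?f p + (if p = t then ?x else 0))) < 0" by simp
  then show False using psd_qform[OF p] by (metis not_less)
qed

lemma psd_row_bound:
  assumes p: "psd d A" and t: "t < d" and a: "Re (A$$(t,t)) > 0"
  shows "(cmod (\<Sum>j<d. A$$(t,j) * f j))^2 / Re (A$$(t,t)) \<le> Re (qform d A f)"
proof -
  let ?b = "\<Sum>j<d. A$$(t,j) * f j"
  let ?a = "Re (A$$(t,t))"
  let ?x = "- ?b / complex_of_real ?a"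
  let ?E = "cnj ?x * ?b + ?x * cnj ?b + cnj ?x * ?x * complex_of_real ?a"
  have alg: "Re (cnj (- b / complex_of_real ?a) * b + (- b / complex_of_real ?a) * cnj b
      + cnj (- b / complex_of_real ?a) * (- b / complex_of_real ?a) * complex_of_real ?a)
      = - ((cmod b)^2 / ?a)" for b
    using a by (simp add: cmod_def power2_eq_square field_simps)
  have "qform d A (\<lambda>p. f p + (if p = t then ?x else 0)) = qform d A f + ?E"
    using qform_perturb[OF p t, of f ?x] psd_diag(1)[OF p t] by (simp add: add.assoc)
  then have "Re (qform d A (\<lambda>p. f p + (if p = t then ?x else 0))) = Re (qform d A f) + Re ?E"
    by (simp only: plus_complex.sel)
  then show ?thesis
    using alg[of ?b] psd_qform[OF p, of "\<lambda>p. f p + (if p = t then ?x else 0)"] by linarith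
qed

lemma qform_minus_outer:
  "qform d (mat d d (\<lambda>(i,j). A$$(i,j) - w i * cnj (w j))) f
    = qform d A f - cnj (\<Sum>j<d. cnj (w j) * f j) * (\<Sum>j<d. cnj (w j) * f j)"
proof -
  have "qform d (mat d d (\<lambda>(i,j). A$$(i,j) - w i * cnj (w j))) f
      = (\<Sum>i<d. \<Sum>j<d. cnj (f i) * A$$(i,j) * f j - (cnj (f i) * w i) * (cnj (w j) * f j))"
    unfolding qform_def by (intro sum.cong refl) (simp add: algebra_simps)
  also have "\<dots> = qform d A f - (\<Sum>i<d. cnj (f i) * w i) * (\<Sum>j<d. cnj (w j) * f j)"
    unfolding qform_def by (simp add: sum_subtractf sum_product)
  also have "(\<Sum>i<d. cnj (f i) * w i) = cnj (\<Sum>j<d. cnj (w j) * f j)"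
    by (simp add: mult.commute)
  finally show ?thesis .
qed

lemma psd_minus_outer_column:
  assumes p: "psd d A" and t: "t < d" and nz: "A$$(t,t) \<noteq> 0"
  defines "w \<equiv> \<lambda>i. A$$(i,t) / complex_of_real (sqrt (Re (A$$(t,t))))"
  shows "\<And>i j. i < d \<Longrightarrow> j < d \<Longrightarrow> w i * cnj (w j) = A$$(i,t) * A$$(t,j) / A$$(t,t)"
    and "psd d (mat d d (\<lambda>(i,j). A$$(i,j) - w i * cnj (w j)))"
proof -
  define a where "a = Re (A$$(t,t))"
  have at: "A$$(t,t) = complex_of_real a" unfolding a_def by (rule psd_diag(1)[OF p t])
  have "a \<noteq> 0" using nz at by auto
  then have apos: "a > 0" using psd_diag(2)[OF p t] a_def by linarith
  have w: "w i = A$$(i,t) / complex_of_real (sqrt a)" for i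
    by (simp add: w_def a_def)
  have cw: "cnj (w j) = A$$(t,j) / complex_of_real (sqrt a)" if "j < d" for j
    using psd_hermitian[OF p t that] by (simp add: w)
  show "w i * cnj (w j) = A$$(i,t) * A$$(t,j) / A$$(t,t)" if "i < d" "j < d" for i j
  proof -
    have "sqrt a * sqrt a = a" using apos by simp
    then have "complex_of_real (sqrt a) * complex_of_real (sqrt a) = complex_of_real a"
      by (metis of_real_mult)
    then show ?thesis
      using psd_hermitian[OF p t that(2)] unfolding w at by (simp add: field_simps)
  qed
  let ?A' = "mat d d (\<lambda>(i,j). A$$(i,j) - w i * cnj (w j))"
  have "hermitian d ?A'"
    using psd_hermitian[OF p] by (auto simp: hermitian_def mult.commute)
  moreover have "0 \<le> Re (qform d ?A' f)" for f
  proof -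
    let ?b = "\<Sum>j<d. A$$(t,j) * f j"
    let ?c = "\<Sum>j<d. cnj (w j) * f j"
    have re: "Re (cnj z * z) = (cmod z)^2" for z
      by (simp add: cmod_def power2_eq_square)
    have c: "?c = ?b / complex_of_real (sqrt a)"
      by (simp add: cw sum_divide_distrib)
    have "Re (cnj ?c * ?c) = (cmod ?c)^2"
      by (rule re)
    also have "cmod ?c = cmod ?b / sqrt a"
      unfolding c using apos by (simp add: norm_divide)
    finally have "Re (cnj ?c * ?c) = (cmod ?b)^2 / a"
      using apos by (simp add: power_divide)
    then have "Re (qform d ?A' f) = Re (qform d A f) - (cmod ?b)^2 / a"
      by (simp add: qform_minus_outer)
    then show ?thesis
      using psd_row_bound[OF p t, of f] apos a_def by simp
  qed
  ultimately show "psd d ?A'"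
    by (simp add: psd_iff)
qed

lemma psd_eliminate_column:
  assumes p: "psd d A" and t: "t < d" and z: "\<forall>i<d. \<forall>j<d. i < t \<or> j < t \<longrightarrow> A$$(i,j) = 0"
  obtains w A' where "psd d A'" "\<forall>i<d. \<forall>j<d. i < Suc t \<or> j < Suc t \<longrightarrow> A'$$(i,j) = 0"
    "\<forall>i<d. \<forall>j<d. A$$(i,j) = A'$$(i,j) + w i * cnj (w j)"
proof (cases "A$$(t,t) = 0")
  case True
  have row: "A$$(t,i) = 0" "A$$(i,t) = 0" if "i < d" for i
    using psd_row_zero[OF p t True that] psd_hermitian[OF p that t] by auto
  show ?thesis
  proof (rule that[of A "\<lambda>_. 0"])
    show "\<forall>i<d. \<forall>j<d. i < Suc t \<or> j < Suc t \<longrightarrow> A$$(i,j) = 0"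
    proof (intro allI impI)
      fix i j assume ij: "i < d" "j < d" "i < Suc t \<or> j < Suc t"
      then consider "i < t \<or> j < t" | "i = t" | "j = t" by linarith
      then show "A$$(i,j) = 0"
        using z ij row by cases auto
    qed
  qed (use p in simp_all)
next
  case False
  define w where "w = (\<lambda>i. A$$(i,t) / complex_of_real (sqrt (Re (A$$(t,t)))))"
  let ?A' = "mat d d (\<lambda>(i,j). A$$(i,j) - w i * cnj (w j))"
  have ww: "w i * cnj (w j) = A$$(i,t) * A$$(t,j) / A$$(t,t)" if "i < d" "j < d" for i j
    using psd_minus_outer_column(1)[OF p t False that] by (simp add: w_def)
  show ?thesis
  proof (rule that[of ?A' w])
    show "psd d ?A'" using psd_minus_outer_column(2)[OF p t False] by (simp add: w_def)
    show "\<forall>i<d. \<forall>j<d. A$$(i,j) = ?A'$$(i,j) + w i * cnj (w j)" by simp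
    show "\<forall>i<d. \<forall>j<d. i < Suc t \<or> j < Suc t \<longrightarrow> ?A'$$(i,j) = 0"
    proof (intro allI impI)
      fix i j assume ij: "i < d" "j < d" "i < Suc t \<or> j < Suc t"
      then have eq: "?A'$$(i,j) = A$$(i,j) - A$$(i,t) * A$$(t,j) / A$$(t,t)"
        by (simp add: ww)
      consider "i < t" | "j < t" | "i = t" | "j = t" using ij(3) by linarith
      then show "?A'$$(i,j) = 0"
      proof cases
        case 1
        then show ?thesis using z ij t unfolding eq by simp
      next
        case 2
        then show ?thesis using z ij t unfolding eq by simp
      qed (use False eq in simp_all)
    qed
  qed
qed

lemma psd_outer_decomp_aux:
  assumes "t \<le> d" "psd d A" "\<forall>i<d. \<forall>j<d. i < t \<or> j < t \<longrightarrow> A$$(i,j) = 0"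
  shows "\<exists>(N::nat) w. \<forall>i<d. \<forall>j<d. A$$(i,j) = (\<Sum>r<N. w r i * cnj (w r j))"
  using assms
proof (induction "d - t" arbitrary: t A)
  case 0
  then show ?case by (intro exI[of _ "0::nat"]) auto
next
  case (Suc k)
  then have t: "t < d" by simp
  obtain w A' where A': "psd d A'" "\<forall>i<d. \<forall>j<d. i < Suc t \<or> j < Suc t \<longrightarrow> A'$$(i,j) = 0"
    and A: "\<forall>i<d. \<forall>j<d. A$$(i,j) = A'$$(i,j) + w i * cnj (w j)"
    by (rule psd_eliminate_column[OF Suc.prems(2) t Suc.prems(3)])
  have "k = d - Suc t" "Suc t \<le> d" using Suc.hyps(2) t by auto
  from Suc.hyps(1)[OF this A'] obtain N :: nat and w'
    where N: "\<forall>i<d. \<forall>j<d. A'$$(i,j) = (\<Sum>r<N. w' r i * cnj (w' r j))"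
    by blast
  have "A$$(i,j) = (\<Sum>r<Suc N. (w'(N := w)) r i * cnj ((w'(N := w)) r j))" if "i < d" "j < d" for i j
    using A N that by simp
  then show ?case by blast
qed

lemma psd_outer_decomp:
  "psd d A \<Longrightarrow> \<exists>(N::nat) w. \<forall>i<d. \<forall>j<d. A$$(i,j) = (\<Sum>r<N. w r i * cnj (w r j))"
  using psd_outer_decomp_aux[of 0 d A] by simp

lemma psd_sum:
  assumes "\<And>r. r < N \<Longrightarrow> psd d (mat d d (f r))"
  shows "psd d (mat d d (\<lambda>ij. \<Sum>r<N. f r ij))"
  unfolding psd_iff
proof (intro conjI allI)
  show "mat d d (\<lambda>ij. \<Sum>r<N. f r ij) \<in> carrier_mat d d" by simp
  have h: "cnj (f r (j,i)) = f r (i,j)" if "r < N" "i < d" "j < d" for r i j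
    using psd_hermitian[OF assms[OF that(1)] that(2,3)] that by simp
  then show "hermitian d (mat d d (\<lambda>ij. \<Sum>r<N. f r ij))"
    by (simp add: hermitian_def)
  fix v
  have "qform d (mat d d (\<lambda>ij. \<Sum>r<N. f r ij)) v = (\<Sum>i<d. \<Sum>j<d. \<Sum>r<N. cnj (v i) * f r (i,j) * v j)"
    unfolding qform_def by (simp add: sum_distrib_left sum_distrib_right)
  also have "\<dots> = (\<Sum>r<N. \<Sum>i<d. \<Sum>j<d. cnj (v i) * f r (i,j) * v j)"
    by (simp only: sum.swap[where A="{..<d}" and B="{..<N}"])
  also have "\<dots> = (\<Sum>r<N. qform d (mat d d (f r)) v)"
    unfolding qform_def by simp
  finally have "qform d (mat d d (\<lambda>ij. \<Sum>r<N. f r ij)) v = (\<Sum>r<N. qform d (mat d d (f r)) v)" .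
  then show "0 \<le> Re (qform d (mat d d (\<lambda>ij. \<Sum>r<N. f r ij)) v)"
    using psd_qform[OF assms] by (auto intro!: sum_nonneg)
qed

lemma psd_outer: "psd d (mat d d (\<lambda>(i,j). u i * cnj (u j)))"
  unfolding psd_iff
proof (intro conjI allI)
  show "hermitian d (mat d d (\<lambda>(i,j). u i * cnj (u j)))"
    by (simp add: hermitian_def mult.commute)
  fix f
  define c where "c = (\<Sum>j<d. cnj (u j) * f j)"
  have "qform d (mat d d (\<lambda>(i,j). u i * cnj (u j))) f
      = (\<Sum>i<d. \<Sum>j<d. (cnj (f i) * u i) * (cnj (u j) * f j))"
    unfolding qform_def by (simp add: mult_ac)
  also have "\<dots> = (\<Sum>i<d. cnj (f i) * u i) * c"
    unfolding c_def by (simp add: sum_product)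
  also have "(\<Sum>i<d. cnj (f i) * u i) = cnj c"
    unfolding c_def by (simp add: mult.commute)
  finally show "0 \<le> Re (qform d (mat d d (\<lambda>(i,j). u i * cnj (u j))) f)"
    by simp
qed simp

lemma psd_outer_sum:
  assumes A: "A \<in> carrier_mat d d"
    and u: "\<forall>i<d. \<forall>j<d. A$$(i,j) = (\<Sum>r<(N::nat). u r i * cnj (u r j))"
  shows "psd d A"
proof -
  have "A = mat d d (\<lambda>ij. \<Sum>r<N. (\<lambda>(i,j). u r i * cnj (u r j)) ij)"
    using A u by (intro eq_matI) auto
  moreover have "psd d (mat d d (\<lambda>ij. \<Sum>r<N. (\<lambda>(i,j). u r i * cnj (u r j)) ij))"
    by (rule psd_sum) (rule psd_outer)
  ultimately show ?thesis by simp
qed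

lemma psd_kron:
  assumes A: "psd p A" and B: "psd q B"
  shows "psd (p*q) (kron A B)"
proof -
  obtain N1 :: nat and w where w: "\<forall>i<p. \<forall>j<p. A$$(i,j) = (\<Sum>r<N1. w r i * cnj (w r j))"
    using psd_outer_decomp[OF A] by blast
  obtain N2 :: nat and z where z: "\<forall>i<q. \<forall>j<q. B$$(i,j) = (\<Sum>s<N2. z s i * cnj (z s j))"
    using psd_outer_decomp[OF B] by blast
  define u where "u r x = w (r div N2) (x div q) * z (r mod N2) (x mod q)" for r x
  show ?thesis
  proof (rule psd_outer_sum[where N="N1*N2" and u=u])
    show "kron A B \<in> carrier_mat (p*q) (p*q)"
      using carrier_kron psd_carrier A B by blast
    show "\<forall>x<p*q. \<forall>y<p*q. kron A B $$ (x,y) = (\<Sum>r<N1*N2. u r x * cnj (u r y))"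
    proof (intro allI impI)
      fix x y assume "x < p*q" "y < p*q"
      then obtain a i b j where ai: "a < p" "i < q" "x = a*q+i" and bj: "b < p" "j < q" "y = b*q+j"
        by (metis block_index_cases)
      have "kron A B $$ (x,y) = (\<Sum>r<N1. w r a * cnj (w r b)) * (\<Sum>s<N2. z s i * cnj (z s j))"
        using ai bj w z by (simp add: index_kron[OF psd_carrier[OF A] psd_carrier[OF B]])
      also have "\<dots> = (\<Sum>r<N1*N2. u r x * cnj (u r y))"
        using ai bj by (simp add: sum_lessThan_mult sum_product u_def mult_ac)
      finally show "kron A B $$ (x,y) = (\<Sum>r<N1*N2. u r x * cnj (u r y))" .
    qed
  qed
qed

lemma psd_smult:
  assumes p: "psd d A" and c: "0 \<le> c"
  shows "psd d (complex_of_real c \<cdot>\<^sub>m A)"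
  unfolding psd_iff
proof (intro conjI allI)
  have A: "A \<in> carrier_mat d d" using psd_carrier[OF p] .
  then show "complex_of_real c \<cdot>\<^sub>m A \<in> carrier_mat d d" by simp
  show "hermitian d (complex_of_real c \<cdot>\<^sub>m A)"
    using psd_hermitian[OF p] A unfolding hermitian_def by simp
  fix f
  have "qform d (complex_of_real c \<cdot>\<^sub>m A) f = complex_of_real c * qform d A f"
    using A unfolding qform_def by (simp add: sum_distrib_left mult_ac)
  then show "0 \<le> Re (qform d (complex_of_real c \<cdot>\<^sub>m A) f)"
    using psd_qform[OF p, of f] c by simp
qed

lemma psd_transpose:
  assumes p: "psd d A"
  shows "psd d (transpose_mat A)"
  unfolding psd_iff
proof (intro conjI allI)
  have A: "A \<in> carrier_mat d d" using psd_carrier[OF p] .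
  then show "transpose_mat A \<in> carrier_mat d d" by simp
  show "hermitian d (transpose_mat A)"
    using psd_hermitian[OF p] A unfolding hermitian_def by simp
  fix f
  have "qform d (transpose_mat A) f = cnj (qform d A (\<lambda>i. cnj (f i)))"
    unfolding qform_def cnj_sum
    using A psd_hermitian[OF p] by (intro sum.cong refl) auto
  then show "0 \<le> Re (qform d (transpose_mat A) f)"
    using psd_qform[OF p] by simp
qed

lemma psd_one: "psd d (1\<^sub>m d)"
  by (rule psd_outer_sum[where N=d and u="\<lambda>r i. if r = i then 1 else 0"])
    (auto simp: if_distrib[of cnj] if_distrib[of "(*) _"] if_distrib[of "\<lambda>y. y * _"] cong: if_cong)

lemma psd_trace:
  assumes p: "psd d A"
  shows "mtrace A = complex_of_real (Re (mtrace A))" "0 \<le> Re (mtrace A)"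
proof -
  have A: "A \<in> carrier_mat d d" using psd_carrier[OF p] .
  have "mtrace A = (\<Sum>i<d. complex_of_real (Re (A$$(i,i))))"
    using psd_diag(1)[OF p] A by (simp add: mtrace_eq_sum)
  then show "mtrace A = complex_of_real (Re (mtrace A))" by simp
  have "Re (mtrace A) = (\<Sum>i<d. Re (A$$(i,i)))" using A by (simp add: mtrace_eq_sum)
  also have "\<dots> \<ge> 0" using psd_diag(2)[OF p] by (intro sum_nonneg) auto
  finally show "0 \<le> Re (mtrace A)" .
qed

lemma psd_trace_zero:
  assumes p: "psd d A" and z: "mtrace A = 0"
  shows "A = 0\<^sub>m d d"
proof -
  have A: "A \<in> carrier_mat d d" using psd_carrier[OF p] .
  have "(\<Sum>i<d. Re (A$$(i,i))) = 0" using z A by (simp add: mtrace_eq_sum flip: Re_sum)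
  then have "Re (A$$(i,i)) = 0" if "i < d" for i
    using sum_nonneg_eq_0_iff[of "{..<d}" "\<lambda>i. Re (A$$(i,i))"] psd_diag(2)[OF p] that by auto
  then have "A$$(i,i) = 0" if "i < d" for i
    using psd_diag(1)[OF p that] that by simp
  then show ?thesis
    using A psd_row_zero[OF p] by (intro eq_matI) auto
qed

lemma psd_normalize:
  assumes \<sigma>: "psd k \<sigma>" and k: "0 < k"
  obtains \<rho> t where "psd k \<rho>" "mtrace \<rho> = 1" "0 \<le> t" "\<sigma> = complex_of_real t \<cdot>\<^sub>m \<rho>"
proof -
  define t where "t = Re (mtrace \<sigma>)"
  have tr: "mtrace \<sigma> = complex_of_real t" and t: "0 \<le> t"
    using psd_trace[OF \<sigma>] by (simp_all add: t_def)
  have \<sigma>c: "\<sigma> \<in> carrier_mat k k" using psd_carrier[OF \<sigma>] .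
  show ?thesis
  proof (cases "t = 0")
    case True
    let ?\<rho> = "complex_of_real (1 / real k) \<cdot>\<^sub>m 1\<^sub>m k"
    show ?thesis
    proof (rule that[of ?\<rho> 0])
      show "psd k ?\<rho>" by (rule psd_smult[OF psd_one]) simp
      show "mtrace ?\<rho> = 1" using k by (simp add: mtrace_smult[of "1\<^sub>m k" k] mtrace_one)
      have "\<sigma> = 0\<^sub>m k k" using psd_trace_zero[OF \<sigma>] tr True by simp
      then show "\<sigma> = complex_of_real 0 \<cdot>\<^sub>m ?\<rho>" by (intro eq_matI) auto
    qed simp
  next
    case False
    show ?thesis
    proof (rule that[of "complex_of_real (1 / t) \<cdot>\<^sub>m \<sigma>" t])
      show "psd k (complex_of_real (1 / t) \<cdot>\<^sub>m \<sigma>)" by (rule psd_smult[OF \<sigma>]) (use t in simp)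
      show "mtrace (complex_of_real (1 / t) \<cdot>\<^sub>m \<sigma>) = 1"
        using False by (simp add: mtrace_smult[OF \<sigma>c] tr flip: of_real_mult)
      show "\<sigma> = complex_of_real t \<cdot>\<^sub>m (complex_of_real (1 / t) \<cdot>\<^sub>m \<sigma>)"
        using False by (simp add: smult_smult_mat)
    qed (rule t)
  qed
qed

lemma psd_compression:
  assumes R: "psd (k*m) R"
  shows "psd k (mat k k (\<lambda>(a,b). \<Sum>i<m. \<Sum>j<m. cnj (w i) * R $$ (a*m+i, b*m+j) * w j))"
    (is "psd k ?S")
  unfolding psd_iff
proof (intro conjI allI)
  show "hermitian k ?S"
    unfolding hermitian_def
  proof (intro allI impI)
    fix a b assume ab: "a < k" "b < k"
    have "cnj (R $$ (b*m+i, a*m+j)) = R $$ (a*m+j, b*m+i)" if "i < m" "j < m" for i j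
      using psd_hermitian[OF R] block_index_less ab that by blast
    then have "cnj (?S $$ (b,a)) = (\<Sum>i<m. \<Sum>j<m. cnj (w j) * R $$ (a*m+j, b*m+i) * w i)"
      using ab by (simp add: mult_ac)
    also have "\<dots> = ?S $$ (a,b)"
      using ab by (subst sum.swap) simp
    finally show "cnj (?S $$ (b,a)) = ?S $$ (a,b)" .
  qed
  fix v
  define u where "u x = v (x div m) * w (x mod m)" for x
  have "qform k ?S v = (\<Sum>a<k. \<Sum>b<k. \<Sum>i<m. \<Sum>j<m. cnj (v a * w i) * R $$ (a*m+i, b*m+j) * (v b * w j))"
    unfolding qform_def by (simp add: sum_distrib_left sum_distrib_right mult_ac)
  also have "\<dots> = (\<Sum>a<k. \<Sum>i<m. \<Sum>b<k. \<Sum>j<m. cnj (v a * w i) * R $$ (a*m+i, b*m+j) * (v b * w j))"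
    by (rule sum.cong[OF refl], rule sum.swap)
  also have "\<dots> = qform (k*m) R u"
    unfolding qform_def u_def by (simp add: sum_lessThan_mult)
  finally show "0 \<le> Re (qform k ?S v)"
    using psd_qform[OF R] by simp
qed simp

text \<open>For \<open>P = F U\<^sub>A\<close> and \<open>R = (I \<otimes> U\<^sub>A)\<^sup>* S\<close> the entry \<open>(a,b)\<close> is \<open>Tr(F S\<^sub>a\<^sub>b)\<close>, the
  coefficient that a Holevo-form map attaches to the block \<open>S\<^sub>a\<^sub>b\<close>.\<close>

definition block_pairing :: "nat \<Rightarrow> nat \<Rightarrow> complex mat \<Rightarrow> complex mat \<Rightarrow> complex mat" where
  "block_pairing k m P R = mat k k (\<lambda>(a,b). mtrace (P * blk m R a b))"

lemma psd_block_pairing: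
  assumes P: "psd m P" and R: "psd (k*m) R"
  shows "psd k (block_pairing k m P R)"
proof -
  obtain N :: nat and w where w: "\<forall>i<m. \<forall>j<m. P$$(i,j) = (\<Sum>r<N. w r i * cnj (w r j))"
    using psd_outer_decomp[OF P] by blast
  let ?C = "\<lambda>r (a,b). \<Sum>j<m. \<Sum>i<m. cnj (w r j) * R $$ (a*m+j, b*m+i) * w r i"
  have "block_pairing k m P R = mat k k (\<lambda>ab. \<Sum>r<N. ?C r ab)"
  proof (rule eq_matI)
    fix a b assume "a < dim_row (mat k k (\<lambda>ab. \<Sum>r<N. ?C r ab))" "b < dim_col (mat k k (\<lambda>ab. \<Sum>r<N. ?C r ab))"
    then have ab: "a < k" "b < k" by simp_all
    have "mtrace (P * blk m R a b) = (\<Sum>i<m. \<Sum>j<m. \<Sum>r<N. cnj (w r j) * R $$ (a*m+j, b*m+i) * w r i)"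
      using psd_carrier[OF P] w by (simp add: mtrace_mult_sum sum_distrib_right mult_ac)
    also have "\<dots> = (\<Sum>r<N. \<Sum>i<m. \<Sum>j<m. cnj (w r j) * R $$ (a*m+j, b*m+i) * w r i)"
      by (simp only: sum.swap[where A="{..<m}" and B="{..<N}"])
    also have "\<dots> = (\<Sum>r<N. \<Sum>j<m. \<Sum>i<m. cnj (w r j) * R $$ (a*m+j, b*m+i) * w r i)"
      by (rule sum.cong[OF refl], rule sum.swap)
    finally show "block_pairing k m P R $$ (a,b) = mat k k (\<lambda>ab. \<Sum>r<N. ?C r ab) $$ (a,b)"
      using ab by (simp add: block_pairing_def)
  qed (simp_all add: block_pairing_def)
  also have "psd k \<dots>"
    by (rule psd_sum) (rule psd_compression[OF R])
  finally show ?thesis .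
qed

section \<open>States, channels and separability\<close>

lemma U_density_kron:
  assumes UB: "UB \<in> carrier_mat n n" and \<rho>: "psd k \<rho>" "mtrace \<rho> = 1" and D: "U_density n UB D"
  shows "U_density (k*n) (kron (1\<^sub>m k) UB) (kron \<rho> D)"
proof -
  have \<rho>c: "\<rho> \<in> carrier_mat k k" using psd_carrier[OF \<rho>(1)] .
  have Dc: "D \<in> carrier_mat n n" and Dpsd: "psd n (cadj UB * D)" and Dtr: "mtrace (cadj UB * D) = 1"
    using D by (auto simp: U_density_def U_positive_def)
  have "cadj UB * D \<in> carrier_mat n n" using UB Dc by auto
  then show ?thesis
    unfolding U_density_def U_positive_def cadj_kron_one_mult_kron[OF UB \<rho>c Dc]
    using carrier_kron[OF \<rho>c Dc] psd_kron[OF \<rho>(1) Dpsd] mtrace_kron[OF \<rho>c] \<rho>(2) Dtr by simp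
qed

lemma U_channel_blockmap_density:
  assumes UA: "unitary_mat m UA" and UB: "unitary_mat n UB" and ch: "U_channel m n UA UB \<psi>"
    and S: "S \<in> carrier_mat (k*m) (k*m)" and Sd: "U_density (k*m) (kron (1\<^sub>m k) UA) S"
  shows "U_density (k*n) (kron (1\<^sub>m k) UB) (blockmap k m n \<psi> S)"
proof -
  have L: "lin_map m n \<psi>" and CP: "U_CP m n UA UB \<psi>"
    and TP: "\<forall>V\<in>carrier_mat m m. mtrace (cadj UB * \<psi> (UA * V)) = mtrace V"
    using ch by (auto simp: U_channel_def)
  have UAc: "UA \<in> carrier_mat m m" and UBc: "UB \<in> carrier_mat n n" using UA UB unitaryD by auto
  have "psd (k*n) (cadj (kron (1\<^sub>m k) UB) * blockmap k m n \<psi> S)"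
    using CP S Sd unfolding U_CP_def blockdiag_def U_density_def U_positive_def by blast
  moreover have "mtrace (cadj UB * blk n (blockmap k m n \<psi> S) a a) = mtrace (cadj UA * blk m S a a)"
    if "a < k" for a
  proof -
    have "blk n (blockmap k m n \<psi> S) a a = \<psi> (UA * (cadj UA * blk m S a a))"
      using that lin_map_carrier[OF L carrier_blk] unitary_mult_cadj_mult[OF UA carrier_blk]
      by (simp add: blk_blockmap)
    moreover have "cadj UA * blk m S a a \<in> carrier_mat m m" using UAc by auto
    ultimately show ?thesis using TP by simp
  qed
  then have "mtrace (cadj (kron (1\<^sub>m k) UB) * blockmap k m n \<psi> S) = mtrace (cadj (kron (1\<^sub>m k) UA) * S)"
    by (simp add: mtrace_cadj_kron_one_mult[OF UBc carrier_blockmap] mtrace_cadj_kron_one_mult[OF UAc S])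
  ultimately show ?thesis
    using Sd by (simp add: U_density_def U_positive_def)
qed

lemma mtrace_U_density_combination:
  assumes UB: "UB \<in> carrier_mat n n" and D: "\<And>l. l < N \<Longrightarrow> U_density n UB (D l)"
  shows "mtrace (cadj UB * msum n (\<lambda>l. c l \<cdot>\<^sub>m D l) N) = (\<Sum>l<N. c l)"
proof -
  have Dc: "D l \<in> carrier_mat n n" "cadj UB * D l \<in> carrier_mat n n" "mtrace (cadj UB * D l) = 1"
    if "l < N" for l
    using D[OF that] UB by (auto simp: U_density_def U_positive_def)
  have "mtrace (cadj UB * msum n (\<lambda>l. c l \<cdot>\<^sub>m D l) N) = (\<Sum>l<N. mtrace (cadj UB * (c l \<cdot>\<^sub>m D l)))"
    using UB Dc by (intro mtrace_mult_msum) auto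
  also have "\<dots> = (\<Sum>l<N. c l)"
  proof (rule sum.cong[OF refl])
    fix l assume "l \<in> {..<N}"
    then show "mtrace (cadj UB * (c l \<cdot>\<^sub>m D l)) = c l"
      using Dc[of l] by (simp add: mult_smult_distrib[OF carrier_cadj[OF UB]] mtrace_smult)
  qed
  finally show ?thesis .
qed

lemma mtrace_cadj_kron_one_kron_msum:
  assumes UB: "UB \<in> carrier_mat n n"
    and \<sigma>: "\<And>l. l < K \<Longrightarrow> \<sigma> l \<in> carrier_mat k k" and D: "\<And>l. l < K \<Longrightarrow> U_density n UB (D l)"
  shows "mtrace (cadj (kron (1\<^sub>m k) UB) * msum (k*n) (\<lambda>l. kron (\<sigma> l) (D l)) K) = (\<Sum>l<K. mtrace (\<sigma> l))"
proof -
  have Dc: "D l \<in> carrier_mat n n" "cadj UB * D l \<in> carrier_mat n n" "mtrace (cadj UB * D l) = 1"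
    if "l < K" for l
    using D[OF that] UB by (auto simp: U_density_def U_positive_def)
  have "cadj (kron (1\<^sub>m k) UB) \<in> carrier_mat (k*n) (k*n)" using carrier_kron[OF _ UB] by simp
  moreover have "\<forall>l<K. kron (\<sigma> l) (D l) \<in> carrier_mat (k*n) (k*n)" using carrier_kron \<sigma> Dc by blast
  ultimately have "mtrace (cadj (kron (1\<^sub>m k) UB) * msum (k*n) (\<lambda>l. kron (\<sigma> l) (D l)) K)
      = (\<Sum>l<K. mtrace (cadj (kron (1\<^sub>m k) UB) * kron (\<sigma> l) (D l)))"
    by (rule mtrace_mult_msum)
  also have "\<dots> = (\<Sum>l<K. mtrace (\<sigma> l))"
  proof (rule sum.cong[OF refl])
    fix l assume "l \<in> {..<K}"
    then have l: "l < K" by simp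
    show "mtrace (cadj (kron (1\<^sub>m k) UB) * kron (\<sigma> l) (D l)) = mtrace (\<sigma> l)"
      using Dc[OF l] by (simp add: cadj_kron_one_mult_kron[OF UB \<sigma>[OF l]] mtrace_kron[OF \<sigma>[OF l]])
  qed
  finally show ?thesis .
qed

lemma W_separable_kron_sum:
  assumes UB: "UB \<in> carrier_mat n n"
    and \<sigma>: "\<And>l. l < K \<Longrightarrow> psd k (\<sigma> l)" and D: "\<And>l. l < K \<Longrightarrow> U_density n UB (D l)"
    and T: "U_density (k*n) (kron (1\<^sub>m k) UB) (msum (k*n) (\<lambda>l. kron (\<sigma> l) (D l)) K)"
  shows "W_separable k n (1\<^sub>m k) UB (msum (k*n) (\<lambda>l. kron (\<sigma> l) (D l)) K)"
proof -
  have \<sigma>c: "\<sigma> l \<in> carrier_mat k k" if "l < K" for l using psd_carrier[OF \<sigma>[OF that]] .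
  have Dc: "D l \<in> carrier_mat n n" if "l < K" for l
    using D[OF that] by (simp add: U_density_def U_positive_def)
  have tr: "(\<Sum>l<K. mtrace (\<sigma> l)) = 1"
    using T mtrace_cadj_kron_one_kron_msum[OF UB \<sigma>c D] by (simp add: U_density_def)
  have "0 < k"
  proof (rule ccontr)
    assume "\<not> 0 < k"
    then have "mtrace (\<sigma> l) = 0" if "l < K" for l using \<sigma>c[OF that] by (simp add: mtrace_def)
    then show False using tr by simp
  qed
  then have "\<forall>l<K. \<exists>\<rho> t. psd k \<rho> \<and> mtrace \<rho> = 1 \<and> 0 \<le> t \<and> \<sigma> l = complex_of_real t \<cdot>\<^sub>m \<rho>"
    using psd_normalize \<sigma> by metis
  then obtain \<rho> t where \<rho>: "\<And>l. l < K \<Longrightarrow> psd k (\<rho> l) \<and> mtrace (\<rho> l) = 1"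
    and t: "\<And>l. l < K \<Longrightarrow> 0 \<le> t l" and \<sigma>\<rho>: "\<And>l. l < K \<Longrightarrow> \<sigma> l = complex_of_real (t l) \<cdot>\<^sub>m \<rho> l"
    by metis
  have \<rho>c: "\<rho> l \<in> carrier_mat k k" if "l < K" for l using psd_carrier \<rho>[OF that] by blast
  have "mtrace (\<sigma> l) = complex_of_real (t l)" if "l < K" for l
    using \<rho>[OF that] by (simp add: \<sigma>\<rho>[OF that] mtrace_smult[OF \<rho>c[OF that]])
  then have "(\<Sum>l<K. mtrace (\<sigma> l)) = complex_of_real (\<Sum>l<K. t l)"
    by simp
  then have sum_t: "(\<Sum>l<K. t l) = 1"
    using tr by (metis of_real_eq_1_iff)
  have T_eq: "msum (k*n) (\<lambda>l. kron (\<sigma> l) (D l)) K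
      = msum (k*n) (\<lambda>l. complex_of_real (t l) \<cdot>\<^sub>m kron (\<rho> l) (D l)) K"
    by (rule msum_cong) (simp add: \<sigma>\<rho> kron_smult_left[OF \<rho>c Dc])
  have "U_positive k (1\<^sub>m k) (\<rho> l)" if "l < K" for l
    using \<rho>[OF that] \<rho>c[OF that] by (simp add: U_positive_def)
  moreover have "U_positive n UB (D l)" if "l < K" for l
    using D[OF that] by (simp add: U_density_def)
  moreover have "U_density (k*n) (kron (1\<^sub>m k) UB) (kron (\<rho> l) (D l))" if "l < K" for l
    using U_density_kron[OF UB _ _ D[OF that]] \<rho>[OF that] by blast
  ultimately show ?thesis
    unfolding W_separable_def using T T_eq t sum_t by blast
qed

lemma U_density_rescale:
  assumes UB: "UB \<in> carrier_mat n n" and X: "U_positive n UB X"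
    and c: "mtrace (cadj UB * X) = complex_of_real c" "0 < c"
  shows "U_density n UB (complex_of_real (1 / c) \<cdot>\<^sub>m X)"
proof -
  have Xc: "X \<in> carrier_mat n n" and Xpsd: "psd n (cadj UB * X)"
    using X by (auto simp: U_positive_def)
  have e: "cadj UB * (complex_of_real (1 / c) \<cdot>\<^sub>m X) = complex_of_real (1 / c) \<cdot>\<^sub>m (cadj UB * X)"
    by (rule mult_smult_distrib[OF carrier_cadj[OF UB] Xc])
  have "cadj UB * X \<in> carrier_mat n n" using UB Xc by auto
  then show ?thesis
    unfolding U_density_def U_positive_def e
    using Xc psd_smult[OF Xpsd, of "1 / c"] c by (simp add: mtrace_smult)
qed

lemma mtrace_kron_factors:
  assumes UB: "UB \<in> carrier_mat n n" and \<rho>1: "\<rho>1 \<in> carrier_mat k k" and \<rho>2: "\<rho>2 \<in> carrier_mat n n"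
    and d: "U_density (k*n) (kron (1\<^sub>m k) UB) (kron \<rho>1 \<rho>2)"
  shows "mtrace \<rho>1 * mtrace (cadj UB * \<rho>2) = 1"
proof -
  have "cadj UB * \<rho>2 \<in> carrier_mat n n" using UB \<rho>2 by auto
  then show ?thesis
    using d by (simp add: U_density_def cadj_kron_one_mult_kron[OF UB \<rho>1 \<rho>2] mtrace_kron[OF \<rho>1])
qed

lemma W_separable_kron_decomp:
  assumes UB: "UB \<in> carrier_mat n n" and sep: "W_separable k n (1\<^sub>m k) UB T"
  obtains N \<sigma> D where "\<And>l. l < N \<Longrightarrow> psd k (\<sigma> l)" "\<And>l. l < N \<Longrightarrow> U_density n UB (D l)"
    "T = msum (k*n) (\<lambda>l. kron (\<sigma> l) (D l)) N"
proof -
  obtain N lam \<rho>1 \<rho>2 where lam: "\<forall>l<N. 0 \<le> lam l"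
    and pos: "\<forall>l<N. U_positive k (1\<^sub>m k) (\<rho>1 l) \<and> U_positive n UB (\<rho>2 l) \<and>
        U_density (k*n) (kron (1\<^sub>m k) UB) (kron (\<rho>1 l) (\<rho>2 l))"
    and T: "T = msum (k*n) (\<lambda>l. complex_of_real (lam l) \<cdot>\<^sub>m kron (\<rho>1 l) (\<rho>2 l)) N"
    using sep unfolding W_separable_def by blast
  define c where "c l = Re (mtrace (cadj UB * \<rho>2 l))" for l
  have \<rho>1: "\<rho>1 l \<in> carrier_mat k k" "psd k (\<rho>1 l)" if "l < N" for l
    using pos that by (auto simp: U_positive_def)
  have \<rho>2: "\<rho>2 l \<in> carrier_mat n n" "psd n (cadj UB * \<rho>2 l)" if "l < N" for l
    using pos that by (auto simp: U_positive_def)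
  have tr2: "mtrace (cadj UB * \<rho>2 l) = complex_of_real (c l)" "0 \<le> c l" if "l < N" for l
    using psd_trace[OF \<rho>2(2)[OF that]] by (simp_all add: c_def)
  have c: "0 < c l" if "l < N" for l
    using mtrace_kron_factors[OF UB \<rho>1(1)[OF that] \<rho>2(1)[OF that]] pos that tr2[OF that]
    by (cases "c l = 0") auto
  show ?thesis
  proof (rule that[of N "\<lambda>l. complex_of_real (lam l * c l) \<cdot>\<^sub>m \<rho>1 l" "\<lambda>l. complex_of_real (1 / c l) \<cdot>\<^sub>m \<rho>2 l"])
    fix l assume l: "l < N"
    show "psd k (complex_of_real (lam l * c l) \<cdot>\<^sub>m \<rho>1 l)"
      using lam c[OF l] l by (intro psd_smult[OF \<rho>1(2)[OF l]]) simp
    show "U_density n UB (complex_of_real (1 / c l) \<cdot>\<^sub>m \<rho>2 l)"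
      using pos l by (intro U_density_rescale[OF UB _ tr2(1)[OF l] c[OF l]]) blast
  next
    show "T = msum (k*n) (\<lambda>l. kron (complex_of_real (lam l * c l) \<cdot>\<^sub>m \<rho>1 l) (complex_of_real (1 / c l) \<cdot>\<^sub>m \<rho>2 l)) N"
      unfolding T
    proof (rule msum_cong)
      fix l assume l: "l < N"
      let ?a = "complex_of_real (lam l * c l)" and ?b = "complex_of_real (1 / c l)"
      have b: "?b \<cdot>\<^sub>m \<rho>2 l \<in> carrier_mat n n" using \<rho>2(1)[OF l] by simp
      have "?a * ?b = complex_of_real (lam l)" using c[OF l] by (simp add: field_simps)
      then have "?a \<cdot>\<^sub>m (?b \<cdot>\<^sub>m kron (\<rho>1 l) (\<rho>2 l)) = complex_of_real (lam l) \<cdot>\<^sub>m kron (\<rho>1 l) (\<rho>2 l)"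
        by (simp only: smult_smult_mat)
      then show "complex_of_real (lam l) \<cdot>\<^sub>m kron (\<rho>1 l) (\<rho>2 l) = kron (?a \<cdot>\<^sub>m \<rho>1 l) (?b \<cdot>\<^sub>m \<rho>2 l)"
        by (simp only: kron_smult_left[OF \<rho>1(1)[OF l] b] kron_smult_right[OF \<rho>1(1)[OF l] \<rho>2(1)[OF l]])
    qed
  qed
qed

section \<open>Holevo form implies entanglement breaking\<close>

lemma blockmap_Holevo_form:
  assumes UA: "unitary_mat m UA"
    and F: "\<And>l. l < K \<Longrightarrow> F l \<in> carrier_mat m m" and D: "\<And>l. l < K \<Longrightarrow> D l \<in> carrier_mat n n"
    and \<psi>: "\<And>\<rho>. \<rho> \<in> carrier_mat m m \<Longrightarrow> \<psi> \<rho> = msum n (\<lambda>l. mtrace (F l * \<rho>) \<cdot>\<^sub>m D l) K"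
    and S: "S \<in> carrier_mat (k*m) (k*m)"
  shows "blockmap k m n \<psi> S
    = msum (k*n) (\<lambda>l. kron (block_pairing k m (F l * UA) (cadj (kron (1\<^sub>m k) UA) * S)) (D l)) K"
proof (rule blk_eqI)
  have UAc: "UA \<in> carrier_mat m m" using unitaryD[OF UA] by simp
  let ?R = "cadj (kron (1\<^sub>m k) UA) * S"
  have P: "block_pairing k m (F l * UA) ?R \<in> carrier_mat k k" for l
    by (simp add: block_pairing_def)
  show "msum (k*n) (\<lambda>l. kron (block_pairing k m (F l * UA) ?R) (D l)) K \<in> carrier_mat (k*n) (k*n)"
    using carrier_kron[OF P D] by (simp add: carrier_msum)
  fix a b assume ab: "a < k" "b < k"
  have pairing: "block_pairing k m (F l * UA) ?R $$ (a,b) = mtrace (F l * blk m S a b)" if "l < K" for l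
  proof -
    have "block_pairing k m (F l * UA) ?R $$ (a,b) = mtrace (F l * UA * (cadj UA * blk m S a b))"
      using ab by (simp add: block_pairing_def blk_cadj_kron_one_mult[OF UAc S])
    also have "\<dots> = mtrace (F l * (UA * (cadj UA * blk m S a b)))"
    proof -
      have "cadj UA * blk m S a b \<in> carrier_mat m m" using UAc by auto
      then show ?thesis by (simp add: assoc_mult_mat[OF F[OF that] UAc])
    qed
    finally show ?thesis
      by (simp add: unitary_mult_cadj_mult[OF UA carrier_blk])
  qed
  have "blk n (blockmap k m n \<psi> S) a b = \<psi> (blk m S a b)"
    using ab D by (intro blk_blockmap) (simp_all add: \<psi> carrier_msum)
  also have "\<dots> = msum n (\<lambda>l. block_pairing k m (F l * UA) ?R $$ (a,b) \<cdot>\<^sub>m D l) K"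
    by (simp add: \<psi> pairing cong: msum_cong)
  also have "\<dots> = blk n (msum (k*n) (\<lambda>l. kron (block_pairing k m (F l * UA) ?R) (D l)) K) a b"
    by (rule blk_msum_kron[OF P D ab, symmetric])
  finally show "blk n (blockmap k m n \<psi> S) a b
      = blk n (msum (k*n) (\<lambda>l. kron (block_pairing k m (F l * UA) ?R) (D l)) K) a b" .
qed simp

lemma U_Holevo_imp_U_EB:
  assumes UA: "unitary_mat m UA" and UB: "unitary_mat n UB" and ch: "U_channel m n UA UB \<psi>"
    and H: "U_Holevo m n UA UB \<psi>"
  shows "U_EB m n UA UB \<psi>"
  unfolding U_EB_def
proof (intro allI ballI impI)
  fix k S assume S: "S \<in> carrier_mat (k*m) (k*m)" and Sd: "U_density (k*m) (kron (1\<^sub>m k) UA) S"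
  obtain K D F where D: "\<forall>l<K. U_density n UB (D l)" and F: "\<forall>l<K. F l \<in> carrier_mat m m \<and> psd m (F l * UA)"
    and \<psi>: "\<forall>\<rho>\<in>carrier_mat m m. \<psi> \<rho> = msum n (\<lambda>l. mtrace (F l * \<rho>) \<cdot>\<^sub>m D l) K"
    using H unfolding U_Holevo_def by blast
  let ?R = "cadj (kron (1\<^sub>m k) UA) * S"
  have R: "psd (k*m) ?R" using Sd by (simp add: U_density_def U_positive_def)
  have "blockmap k m n \<psi> S = msum (k*n) (\<lambda>l. kron (block_pairing k m (F l * UA) ?R) (D l)) K"
    using D F \<psi> by (intro blockmap_Holevo_form[OF UA _ _ _ S]) (auto simp: U_density_def U_positive_def)
  moreover have "W_separable k n (1\<^sub>m k) UB (msum (k*n) (\<lambda>l. kron (block_pairing k m (F l * UA) ?R) (D l)) K)"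
  proof (rule W_separable_kron_sum)
    show "UB \<in> carrier_mat n n" using unitaryD[OF UB] by simp
    show "psd k (block_pairing k m (F l * UA) ?R)" if "l < K" for l
      using psd_block_pairing[OF _ R] F that by blast
    show "U_density n UB (D l)" if "l < K" for l using D that by blast
    show "U_density (k*n) (kron (1\<^sub>m k) UB) (msum (k*n) (\<lambda>l. kron (block_pairing k m (F l * UA) ?R) (D l)) K)"
      using U_channel_blockmap_density[OF UA UB ch S Sd] calculation by simp
  qed
  ultimately show "W_separable k n (1\<^sub>m k) UB (blockmap k m n \<psi> S)" by simp
qed

section \<open>Entanglement breaking implies Holevo form\<close>

lemma U_channel_unit_coefficients:
  assumes UB: "unitary_mat n UB" and ch: "U_channel m n UA UB \<psi>"
    and G: "\<And>l. l < N \<Longrightarrow> G l \<in> carrier_mat m m" and D: "\<And>l. l < N \<Longrightarrow> U_density n UB (D l)"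
    and units: "\<And>a b. a < m \<Longrightarrow> b < m \<Longrightarrow>
      \<psi> (UA * matrix_unit m a b) = msum n (\<lambda>l. G l $$ (a,b) \<cdot>\<^sub>m D l) N"
  shows "msum m (\<lambda>l. transpose_mat (G l)) N = 1\<^sub>m m"
proof -
  have UBc: "UB \<in> carrier_mat n n" using unitaryD[OF UB] by simp
  have TP: "\<forall>V\<in>carrier_mat m m. mtrace (cadj UB * \<psi> (UA * V)) = mtrace V"
    using ch by (simp add: U_channel_def)
  have T: "\<forall>l<N. transpose_mat (G l) \<in> carrier_mat m m" using G by simp
  show ?thesis
  proof (rule eq_matI)
    fix i j assume "i < dim_row (1\<^sub>m m)" "j < dim_col (1\<^sub>m m)"
    then have ij: "i < m" "j < m" by auto
    have "(\<Sum>l<N. G l $$ (j,i)) = mtrace (cadj UB * \<psi> (UA * matrix_unit m j i))"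
      using ij by (simp add: units mtrace_U_density_combination[OF UBc D])
    also have "\<dots> = 1\<^sub>m m $$ (i,j)"
      using TP ij by (auto simp: mtrace_matrix_unit)
    moreover have "dim_row (G l) = m" "dim_col (G l) = m" if "l < N" for l using G[OF that] by auto
    ultimately show "msum m (\<lambda>l. transpose_mat (G l)) N $$ (i,j) = 1\<^sub>m m $$ (i,j)"
      using ij by (simp add: index_msum[OF T])
  qed (use carrier_msum[OF T] in auto)
qed

lemma U_Holevo_of_unit_values:
  assumes UA: "unitary_mat m UA" and UB: "unitary_mat n UB" and ch: "U_channel m n UA UB \<psi>"
    and G: "\<And>l. l < N \<Longrightarrow> psd m (G l)" and D: "\<And>l. l < N \<Longrightarrow> U_density n UB (D l)"
    and units: "\<And>a b. a < m \<Longrightarrow> b < m \<Longrightarrow>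
      \<psi> (UA * matrix_unit m a b) = msum n (\<lambda>l. G l $$ (a,b) \<cdot>\<^sub>m D l) N"
  shows "U_Holevo m n UA UB \<psi>"
proof -
  have UAc: "UA \<in> carrier_mat m m" using unitaryD[OF UA] by simp
  have L: "lin_map m n \<psi>" using ch by (simp add: U_channel_def)
  have Gc: "G l \<in> carrier_mat m m" if "l < N" for l using psd_carrier[OF G[OF that]] .
  have Dc: "D l \<in> carrier_mat n n" if "l < N" for l using D[OF that] by (simp add: U_density_def U_positive_def)
  define F where "F l = transpose_mat (G l) * cadj UA" for l
  have FUA: "F l * UA = transpose_mat (G l)" if "l < N" for l
    unfolding F_def using Gc[OF that] by (simp add: mult_cadj_mult_unitary[OF UA])
  have "msum m (\<lambda>l. F l * UA) N = 1\<^sub>m m"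
    using U_channel_unit_coefficients[OF UB ch Gc D units] FUA by (simp cong: msum_cong)
  moreover have "\<psi> \<rho> = msum n (\<lambda>l. mtrace (F l * \<rho>) \<cdot>\<^sub>m D l) N" if \<rho>: "\<rho> \<in> carrier_mat m m" for \<rho>
  proof -
    have X: "cadj UA * \<rho> \<in> carrier_mat m m" using UAc \<rho> by auto
    have "\<psi> \<rho> = \<psi> (UA * (cadj UA * \<rho>))" using unitary_mult_cadj_mult[OF UA \<rho>] by simp
    also have "\<dots> = msum n (\<lambda>l. mtrace (transpose_mat (G l) * (cadj UA * \<rho>)) \<cdot>\<^sub>m D l) N"
      by (rule lin_map_from_unit_values[OF lin_map_mult_left[OF L UAc] Gc Dc units X])
    also have "\<dots> = msum n (\<lambda>l. mtrace (F l * \<rho>) \<cdot>\<^sub>m D l) N"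
      using Gc UAc \<rho> by (intro msum_cong) (simp add: F_def assoc_mult_mat[of _ m m _ m _ m])
    finally show ?thesis .
  qed
  moreover have "F l \<in> carrier_mat m m \<and> psd m (F l * UA)" if "l < N" for l
    using Gc[OF that] UAc psd_transpose[OF G[OF that]] FUA[OF that] by (simp add: F_def)
  ultimately show ?thesis
    unfolding U_Holevo_def using D by blast
qed

text \<open>\<open>(I \<otimes> U)\<close> applied to the maximally entangled state \<open>(1/m) \<Sum>\<^sub>a\<^sub>b E\<^sub>a\<^sub>b \<otimes> E\<^sub>a\<^sub>b\<close>.\<close>

definition max_entangled :: "nat \<Rightarrow> complex mat \<Rightarrow> complex mat" where
  "max_entangled m U = mat (m*m) (m*m)
     (\<lambda>(x,y). if y div m = y mod m then U $$ (x mod m, x div m) / of_nat m else 0)"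

lemma blk_max_entangled:
  assumes U: "U \<in> carrier_mat m m" and ab: "a < m" "b < m"
  shows "blk m (max_entangled m U) a b = complex_of_real (1 / real m) \<cdot>\<^sub>m (U * matrix_unit m a b)"
proof (rule eq_matI)
  fix i j assume "i < dim_row (complex_of_real (1 / real m) \<cdot>\<^sub>m (U * matrix_unit m a b))"
    "j < dim_col (complex_of_real (1 / real m) \<cdot>\<^sub>m (U * matrix_unit m a b))"
  then have ij: "i < m" "j < m" using U by auto
  have "blk m (max_entangled m U) a b $$ (i,j) = (if j = b then U $$ (i,a) / of_nat m else 0)"
    using ij ab block_index_less[of a m i m] block_index_less[of b m j m] by (simp add: max_entangled_def)
  also have "\<dots> = complex_of_real (1 / real m) * (U * matrix_unit m a b) $$ (i,j)"
    by (simp add: index_mult_matrix_unit[OF U ab(1) ij])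
  also have "\<dots> = (complex_of_real (1 / real m) \<cdot>\<^sub>m (U * matrix_unit m a b)) $$ (i,j)"
    using U ij by simp
  finally show "blk m (max_entangled m U) a b $$ (i,j) = (complex_of_real (1 / real m) \<cdot>\<^sub>m (U * matrix_unit m a b)) $$ (i,j)" .
qed (use U in auto)

lemma blk_cadj_kron_one_mult_max_entangled:
  assumes UA: "unitary_mat m UA" and ab: "a < m" "b < m"
  shows "blk m (cadj (kron (1\<^sub>m m) UA) * max_entangled m UA) a b
    = complex_of_real (1 / real m) \<cdot>\<^sub>m matrix_unit m a b"
proof -
  have UAc: "UA \<in> carrier_mat m m" using unitaryD[OF UA] by simp
  have "max_entangled m UA \<in> carrier_mat (m*m) (m*m)" by (simp add: max_entangled_def)
  moreover have "UA * matrix_unit m a b \<in> carrier_mat m m" using UAc by auto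
  ultimately show ?thesis
    using ab by (simp add: blk_cadj_kron_one_mult[OF UAc] blk_max_entangled[OF UAc]
        mult_smult_distrib[OF carrier_cadj[OF UAc]] cadj_mult_unitary_mult[OF UA carrier_matrix_unit[of m a b]])
qed

lemma max_entangled_density:
  assumes m: "0 < m" and UA: "unitary_mat m UA"
  shows "U_density (m*m) (kron (1\<^sub>m m) UA) (max_entangled m UA)"
proof -
  have UAc: "UA \<in> carrier_mat m m" using unitaryD[OF UA] by simp
  have S: "max_entangled m UA \<in> carrier_mat (m*m) (m*m)" by (simp add: max_entangled_def)
  let ?\<Omega> = "cadj (kron (1\<^sub>m m) UA) * max_entangled m UA"
  have \<Omega>: "?\<Omega> \<in> carrier_mat (m*m) (m*m)" using S carrier_kron[OF _ UAc, of "1\<^sub>m m" m] by auto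
  have entries: "?\<Omega> $$ (a*m+i, b*m+j) = (if i = a \<and> j = b then complex_of_real (1 / real m) else 0)"
    if "a < m" "i < m" "b < m" "j < m" for a i b j
  proof -
    have "?\<Omega> $$ (a*m+i, b*m+j) = blk m ?\<Omega> a b $$ (i,j)" using that by simp
    also have "\<dots> = (complex_of_real (1 / real m) \<cdot>\<^sub>m matrix_unit m a b) $$ (i,j)"
      using blk_cadj_kron_one_mult_max_entangled[OF UA] that by simp
    finally show ?thesis using that by simp
  qed
  let ?u = "\<lambda>(r::nat) x. if x div m = x mod m then complex_of_real (1 / sqrt (real m)) else 0"
  have "psd (m*m) ?\<Omega>"
  proof (rule psd_outer_sum[OF \<Omega>, where N=1 and u="?u"], intro allI impI)
    fix x y assume "x < m*m" "y < m*m"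
    then obtain a i b j where "a < m" "i < m" "x = a*m+i" "b < m" "j < m" "y = b*m+j"
      by (metis block_index_cases)
    moreover have "complex_of_real (1 / sqrt (real m)) * complex_of_real (1 / sqrt (real m))
        = complex_of_real (1 / real m)"
      using m by (simp flip: of_real_mult)
    ultimately show "?\<Omega> $$ (x,y) = (\<Sum>r<1. ?u r x * cnj (?u r y))"
      using entries by auto
  qed
  moreover have "mtrace ?\<Omega> = 1"
    using m by (simp add: mtrace_blk_sum[OF \<Omega>] blk_cadj_kron_one_mult_max_entangled[OF UA]
        mtrace_smult[of _ m] mtrace_matrix_unit)
  ultimately show ?thesis
    using S by (simp add: U_density_def U_positive_def)
qed

lemma lin_map_unit_value_max_entangled:
  assumes L: "lin_map m n \<psi>" and U: "U \<in> carrier_mat m m" and ab: "a < m" "b < m"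
  shows "\<psi> (U * matrix_unit m a b) = of_nat m \<cdot>\<^sub>m blk n (blockmap m m n \<psi> (max_entangled m U)) a b"
proof -
  have UE: "U * matrix_unit m a b \<in> carrier_mat m m" using U by auto
  have "blk n (blockmap m m n \<psi> (max_entangled m U)) a b = \<psi> (blk m (max_entangled m U) a b)"
    using ab lin_map_carrier[OF L carrier_blk] by (intro blk_blockmap)
  also have "\<dots> = complex_of_real (1 / real m) \<cdot>\<^sub>m \<psi> (U * matrix_unit m a b)"
    by (simp add: blk_max_entangled[OF U ab] lin_map_smult[OF L UE])
  finally show ?thesis
    using ab lin_map_carrier[OF L UE] by (simp add: smult_smult_mat)
qed

lemma U_EB_imp_U_Holevo:
  assumes m: "0 < m" and UA: "unitary_mat m UA" and UB: "unitary_mat n UB" and ch: "U_channel m n UA UB \<psi>"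
    and EB: "U_EB m n UA UB \<psi>"
  shows "U_Holevo m n UA UB \<psi>"
proof -
  have UAc: "UA \<in> carrier_mat m m" and UBc: "UB \<in> carrier_mat n n" using UA UB unitaryD by auto
  have L: "lin_map m n \<psi>" using ch by (simp add: U_channel_def)
  have "W_separable m n (1\<^sub>m m) UB (blockmap m m n \<psi> (max_entangled m UA))"
    using EB max_entangled_density[OF m UA] unfolding U_EB_def by (simp add: max_entangled_def)
  then obtain N \<sigma> D where \<sigma>: "\<And>l. l < N \<Longrightarrow> psd m (\<sigma> l)" and D: "\<And>l. l < N \<Longrightarrow> U_density n UB (D l)"
    and T: "blockmap m m n \<psi> (max_entangled m UA) = msum (m*n) (\<lambda>l. kron (\<sigma> l) (D l)) N"
    by (rule W_separable_kron_decomp[OF UBc]) blast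
  have \<sigma>c: "\<sigma> l \<in> carrier_mat m m" and Dc: "D l \<in> carrier_mat n n" if "l < N" for l
    using psd_carrier[OF \<sigma>[OF that]] D[OF that] by (auto simp: U_density_def U_positive_def)
  show ?thesis
  proof (rule U_Holevo_of_unit_values[OF UA UB ch, where G="\<lambda>l. complex_of_real (real m) \<cdot>\<^sub>m \<sigma> l"])
    show "psd m (complex_of_real (real m) \<cdot>\<^sub>m \<sigma> l)" if "l < N" for l
      by (rule psd_smult[OF \<sigma>[OF that]]) simp
    show "U_density n UB (D l)" if "l < N" for l by (rule D[OF that])
    fix a b assume ab: "a < m" "b < m"
    have "\<psi> (UA * matrix_unit m a b) = of_nat m \<cdot>\<^sub>m msum n (\<lambda>l. \<sigma> l $$ (a,b) \<cdot>\<^sub>m D l) N"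
      by (simp add: lin_map_unit_value_max_entangled[OF L UAc ab] T blk_msum_kron[OF \<sigma>c Dc ab])
    also have "\<dots> = msum n (\<lambda>l. of_nat m \<cdot>\<^sub>m (\<sigma> l $$ (a,b) \<cdot>\<^sub>m D l)) N"
      by (rule smult_msum) (simp add: Dc)
    also have "\<dots> = msum n (\<lambda>l. (complex_of_real (real m) \<cdot>\<^sub>m \<sigma> l) $$ (a,b) \<cdot>\<^sub>m D l) N"
    proof (rule msum_cong)
      fix l assume "l < N"
      then show "of_nat m \<cdot>\<^sub>m (\<sigma> l $$ (a,b) \<cdot>\<^sub>m D l) = (complex_of_real (real m) \<cdot>\<^sub>m \<sigma> l) $$ (a,b) \<cdot>\<^sub>m D l"
        using carrier_matD[OF \<sigma>c] ab by (simp add: smult_smult_mat)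
    qed
    finally show "\<psi> (UA * matrix_unit m a b) = msum n (\<lambda>l. (complex_of_real (real m) \<cdot>\<^sub>m \<sigma> l) $$ (a,b) \<cdot>\<^sub>m D l) N" .
  qed
qed

theorem theorem6p3:
  fixes m n :: nat and UA UB :: "complex mat" and \<psi> :: "complex mat \<Rightarrow> complex mat"
  assumes "0 < m" and "0 < n"
    and "unitary_mat m UA" and "unitary_mat n UB"
    and "U_channel m n UA UB \<psi>"
  shows "U_EB m n UA UB \<psi> \<longleftrightarrow> U_Holevo m n UA UB \<psi>"
  using U_EB_imp_U_Holevo[OF assms(1,3,4,5)] U_Holevo_imp_U_EB[OF assms(3,4,5)] by blast

end
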